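(* Let $F_n$ ($n\ge1$) and $F$ be distribution functions on $\mathbb{R}^d$ of random vectors satisfying condition $(\mathcal{H})$. Then $\|\mathbf{x}\|_{F_n}\to\|\mathbf{x}\|_F$ for every $\mathbf{x}\in\mathbb{R}^{d+1}$ if and only if $F_n\to F$ in the Wasserstein metric.
   Context: Condition $(\mathcal{H})$ on a random vector $\mathbf{X}=(X_1,\dots,X_d)$: each $X_i$ is almost surely nonnegative with $0<E(X_i)<\infty$. If $\mathbf{X}$ satisfies $(\mathcal{H})$ and has distribution function $F$, its $F$-norm is $\|\mathbf{x}\|_F:=E\big(\max(|x_0|,|x_1|X_1,\dots,|x_d|X_d)\big)$ for $\mathbf{x}=(x_0,\dots,x_d)\in\mathbb{R}^{d+1}$ (this depends only on $F$). The Wasserstein metric between distributions $P,Q$ on $\mathbb{R}^d$ with finite first moments is $d_W(P,Q)=\inf E(\|\mathbf{X}-\mathbf{Y}\|_1)$, the infimum over all random vectors $\mathbf{X}\sim P$, $\mathbf{Y}\sim Q$ on a common probability space, where $\|\cdot\|_1$ is the $L^1$-norm. *)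

theory Defs
  imports "HOL-Probability.Probability"
begin

text \<open>A distribution on R^d (d = CARD('n)) is a probability measure on the Borel sets
of real^'n.  Condition (H): each coordinate is a.s. nonnegative, integrable, with
positive expectation.\<close>

definition condH :: "(real ^ 'n::finite) measure \<Rightarrow> bool" where
  "condH P \<longleftrightarrow> prob_space P \<and> sets P = sets borel \<and>
     (\<forall>i. (AE y in P. 0 \<le> y $ i) \<and> integrable P (\<lambda>y. y $ i) \<and>
          0 < integral\<^sup>L P (\<lambda>y. y $ i))"

text \<open>The F-norm of x = (x0, x1, ..., xd), represented as the pair (x0, x).\<close>

definition Fnorm :: "(real ^ 'n::finite) measure \<Rightarrow> real \<Rightarrow> real ^ 'n \<Rightarrow> real" where
  "Fnorm P x0 x = integral\<^sup>L P (\<lambda>y. max \<bar>x0\<bar> (Max (range (\<lambda>i. \<bar>x $ i\<bar> * y $ i))))"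

definition l1norm :: "real ^ 'n::finite \<Rightarrow> real" where
  "l1norm z = (\<Sum>i\<in>UNIV. \<bar>z $ i\<bar>)"

definition couplings :: "(real ^ 'n::finite) measure \<Rightarrow> (real ^ 'n) measure
    \<Rightarrow> ((real ^ 'n) \<times> (real ^ 'n)) measure set" where
  "couplings P Q = {M. prob_space M \<and> sets M = sets borel \<and>
      distr M borel fst = P \<and> distr M borel snd = Q}"

definition wasserstein :: "(real ^ 'n::finite) measure \<Rightarrow> (real ^ 'n) measure \<Rightarrow> real" where
  "wasserstein P Q = (INF M \<in> couplings P Q. integral\<^sup>L M (\<lambda>(x, y). l1norm (x - y)))"

end

theory Submission
  imports Defs
begin

(* The integrand max(|x0|, max_i |x_i| y_i) of the F-norm is Lipschitz in y for the l1 norm, so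
   F-norm differences are bounded by the Wasserstein distance.

   Conversely, for x0 = t >= 0 and x = (1/c_1, ..., 1/c_d) the F-norm is E max(t, Z) with
   Z = max_i X_i / c_i, and difference quotients in t squeeze P(Z <= 1) = P(X <= c). Hence
   convergence of F-norms gives convergence of the distribution functions at corners whose
   coordinate hyperplanes carry no mass of the limit, and by inclusion-exclusion of the masses
   of the half-open cells of a grid built from such corners. Keeping the common mass
   min(P C, Q C) of every cell C inside C and coupling the remaining masses independently gives
   a coupling whose cost is at most the cell diameter plus terms controlled by the differences
   of cell masses and by the tails E(max(R, max_i X_i) - R) = ||(R, 1, ..., 1)||_F - R, which
   converge as well. *)

section \<open>Lipschitz continuity of the F-norm integrand\<close>

definition Fnorm_integrand :: "real \<Rightarrow> real ^ 'n::finite \<Rightarrow> real ^ 'n \<Rightarrow> real" where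
  "Fnorm_integrand x0 x y = max \<bar>x0\<bar> (Max (range (\<lambda>i. \<bar>x $ i\<bar> * y $ i)))"

lemma Fnorm_eq_integral: "Fnorm P x0 x = integral\<^sup>L P (Fnorm_integrand x0 x)"
  unfolding Fnorm_def Fnorm_integrand_def ..

lemma borel_measurable_Fnorm_integrand [measurable]:
  "Fnorm_integrand x0 x \<in> borel_measurable borel"
  unfolding Fnorm_integrand_def[abs_def]
  by (intro borel_measurable_max borel_measurable_const borel_measurable_Max) auto

lemma borel_measurable_l1norm [measurable]: "l1norm \<in> borel_measurable borel"
  unfolding l1norm_def[abs_def] by measurable

lemma l1norm_nonneg: "0 \<le> l1norm z"
  unfolding l1norm_def by (simp add: sum_nonneg)

lemma abs_component_le_l1norm: "\<bar>z $ i\<bar> \<le> l1norm z"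
  unfolding l1norm_def by (rule member_le_sum) auto

lemma l1norm_diff_le: "l1norm (y - z) \<le> l1norm y + l1norm z"
  unfolding l1norm_def by (simp add: sum.distrib[symmetric] sum_mono abs_triangle_ineq4)

lemma abs_Max_range_diff_le:
  fixes u v :: "'i::finite \<Rightarrow> real"
  shows "\<bar>Max (range u) - Max (range v)\<bar> \<le> (\<Sum>i\<in>UNIV. \<bar>u i - v i\<bar>)"
proof -
  have one_side: "Max (range u) - Max (range v) \<le> (\<Sum>i\<in>UNIV. \<bar>u i - v i\<bar>)"
    for u v :: "'i \<Rightarrow> real"
  proof -
    have "Max (range u) \<in> range u" by (rule Max_in) auto
    then obtain j where j: "Max (range u) = u j" by blast
    have "v j \<le> Max (range v)" by simp
    then have "Max (range u) - Max (range v) \<le> \<bar>u j - v j\<bar>" using j by linarith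
    also have "\<dots> \<le> (\<Sum>i\<in>UNIV. \<bar>u i - v i\<bar>)"
      by (rule member_le_sum) auto
    finally show ?thesis .
  qed
  show ?thesis
    using one_side[of u v] one_side[of v u] by (simp add: abs_minus_commute abs_le_iff)
qed

lemma Fnorm_integrand_lipschitz:
  "\<bar>Fnorm_integrand x0 x y - Fnorm_integrand x0 x z\<bar> \<le> l1norm x * l1norm (y - z)"
proof -
  have "\<bar>Max (range (\<lambda>i. \<bar>x $ i\<bar> * y $ i)) - Max (range (\<lambda>i. \<bar>x $ i\<bar> * z $ i))\<bar>
      \<le> (\<Sum>i\<in>UNIV. \<bar>\<bar>x $ i\<bar> * y $ i - \<bar>x $ i\<bar> * z $ i\<bar>)"
    by (rule abs_Max_range_diff_le)
  also have "\<dots> = (\<Sum>i\<in>UNIV. \<bar>x $ i\<bar> * \<bar>(y - z) $ i\<bar>)"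
    by (intro sum.cong) (auto simp: abs_mult right_diff_distrib[symmetric])
  also have "\<dots> \<le> (\<Sum>i\<in>UNIV. l1norm x * \<bar>(y - z) $ i\<bar>)"
    by (intro sum_mono mult_right_mono abs_component_le_l1norm) auto
  also have "\<dots> = l1norm x * l1norm (y - z)"
    by (simp add: l1norm_def sum_distrib_left)
  finally show ?thesis
    unfolding Fnorm_integrand_def by linarith
qed

section \<open>Couplings and the Wasserstein distance\<close>

definition finite_first_moment :: "(real ^ 'n::finite) measure \<Rightarrow> bool" where
  "finite_first_moment P \<longleftrightarrow> prob_space P \<and> sets P = sets borel \<and> integrable P l1norm"

lemma condH_imp_finite_first_moment:
  assumes "condH P" shows "finite_first_moment P"
proof -
  have "integrable P (\<lambda>y. \<Sum>i\<in>UNIV. \<bar>y $ i\<bar>)"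
    using assms unfolding condH_def by auto
  then show ?thesis
    using assms unfolding condH_def finite_first_moment_def l1norm_def[abs_def] by auto
qed

lemma
  assumes "finite_first_moment P"
  shows finite_first_moment_prob_space: "prob_space P"
    and finite_first_moment_sets: "sets P = sets borel"
    and finite_first_moment_space: "space P = UNIV"
    and finite_first_moment_integrable: "integrable P l1norm"
  using assms sets_eq_imp_space_eq[of P borel] unfolding finite_first_moment_def by auto

lemma finite_first_moment_measurable:
  assumes "finite_first_moment P" "f \<in> borel_measurable borel"
  shows "f \<in> borel_measurable P"
  using assms(2) unfolding measurable_cong_sets[OF finite_first_moment_sets[OF assms(1)] refl] .

lemma integrable_lipschitz:
  fixes f :: "real ^ 'n::finite \<Rightarrow> real"
  assumes P: "finite_first_moment P" and f: "f \<in> borel_measurable borel"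
    and lip: "\<And>y z. \<bar>f y - f z\<bar> \<le> L * l1norm (y - z)"
  shows "integrable P f"
proof (rule Bochner_Integration.integrable_bound)
  interpret prob_space P using finite_first_moment_prob_space[OF P] .
  show "integrable P (\<lambda>y. \<bar>f 0\<bar> + \<bar>L\<bar> * l1norm y)"
    using finite_first_moment_integrable[OF P] by auto
  show "f \<in> borel_measurable P" using finite_first_moment_measurable[OF P f] .
  have "norm (f y) \<le> norm (\<bar>f 0\<bar> + \<bar>L\<bar> * l1norm y)" for y
  proof -
    have "\<bar>f y\<bar> \<le> \<bar>f 0\<bar> + \<bar>L\<bar> * l1norm y"
      using lip[of y 0] abs_ge_self[of L] mult_right_mono[OF _ l1norm_nonneg, of L "\<bar>L\<bar>" y]
      by simp
    then show ?thesis by simp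
  qed
  then show "AE y in P. norm (f y) \<le> norm (\<bar>f 0\<bar> + \<bar>L\<bar> * l1norm y)"
    by simp
qed

lemma sets_pair_measure_borel:
  assumes "sets P = sets (borel :: 'a::second_countable_topology measure)"
    and "sets Q = sets (borel :: 'b::second_countable_topology measure)"
  shows "sets (P \<Otimes>\<^sub>M Q) = sets (borel :: ('a \<times> 'b) measure)"
  using sets_pair_measure_cong[OF assms] by (metis borel_prod)

lemma borel_measurable_fst_snd_vec:
  "fst \<in> borel_measurable (borel :: ((real ^ 'n::finite) \<times> (real ^ 'n)) measure)"
  "snd \<in> borel_measurable (borel :: ((real ^ 'n::finite) \<times> (real ^ 'n)) measure)"
  by (intro borel_measurable_continuous_onI continuous_intros)+

lemma
  assumes "M \<in> couplings P Q"
  shows coupling_sets: "sets M = sets borel"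
    and coupling_distr_fst: "distr M borel fst = P"
    and coupling_distr_snd: "distr M borel snd = Q"
  using assms unfolding couplings_def by auto

lemma coupling_measurable:
  assumes "M \<in> couplings P Q" "f \<in> borel_measurable borel"
  shows "f \<in> borel_measurable M"
  using assms(2) unfolding measurable_cong_sets[OF coupling_sets[OF assms(1)] refl] .

lemma
  fixes h :: "real ^ 'n::finite \<Rightarrow> real"
  assumes M: "M \<in> couplings P Q" and h: "h \<in> borel_measurable borel"
  shows integral_coupling_fst: "integral\<^sup>L P h = (\<integral>z. h (fst z) \<partial>M)"
    and integral_coupling_snd: "integral\<^sup>L Q h = (\<integral>z. h (snd z) \<partial>M)"
    and integrable_coupling_fst: "integrable P h \<Longrightarrow> integrable M (\<lambda>z. h (fst z))"
    and integrable_coupling_snd: "integrable Q h \<Longrightarrow> integrable M (\<lambda>z. h (snd z))"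
proof -
  have fst: "fst \<in> measurable M borel" and snd: "snd \<in> measurable M borel"
    using borel_measurable_fst_snd_vec by (simp_all only: measurable_cong_sets[OF coupling_sets[OF M] refl])
  show "integral\<^sup>L P h = (\<integral>z. h (fst z) \<partial>M)"
    using integral_distr[OF fst h] coupling_distr_fst[OF M] by simp
  show "integral\<^sup>L Q h = (\<integral>z. h (snd z) \<partial>M)"
    using integral_distr[OF snd h] coupling_distr_snd[OF M] by simp
  show "integrable P h \<Longrightarrow> integrable M (\<lambda>z. h (fst z))"
    using integrable_distr_eq[OF fst h] coupling_distr_fst[OF M] by simp
  show "integrable Q h \<Longrightarrow> integrable M (\<lambda>z. h (snd z))"
    using integrable_distr_eq[OF snd h] coupling_distr_snd[OF M] by simp
qed

lemma (in pair_sigma_finite) distr_fst_density: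
  fixes f :: "'a \<times> 'b \<Rightarrow> ennreal"
  assumes f [measurable]: "f \<in> borel_measurable (M1 \<Otimes>\<^sub>M M2)"
    and marginal: "AE x in M1. (\<integral>\<^sup>+y. f (x, y) \<partial>M2) = 1"
  shows "distr (density (M1 \<Otimes>\<^sub>M M2) f) M1 fst = M1"
proof (rule measure_eqI)
  fix A assume "A \<in> sets (distr (density (M1 \<Otimes>\<^sub>M M2) f) M1 fst)"
  then have A [measurable]: "A \<in> sets M1" by simp
  have "fst -` A \<inter> space (density (M1 \<Otimes>\<^sub>M M2) f) = A \<times> space M2"
    using sets.sets_into_space[OF A] by (auto simp: space_pair_measure)
  then have "emeasure (distr (density (M1 \<Otimes>\<^sub>M M2) f) M1 fst) A
      = emeasure (density (M1 \<Otimes>\<^sub>M M2) f) (A \<times> space M2)"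
    by (simp add: emeasure_distr)
  also have "\<dots> = (\<integral>\<^sup>+x. \<integral>\<^sup>+y. f (x, y) * indicator (A \<times> space M2) (x, y) \<partial>M2 \<partial>M1)"
    by (simp add: emeasure_density M2.nn_integral_fst[symmetric])
  also have "\<dots> = (\<integral>\<^sup>+x. indicator A x * (\<integral>\<^sup>+y. f (x, y) \<partial>M2) \<partial>M1)"
    by (intro nn_integral_cong) (auto simp: indicator_def intro!: nn_integral_cong)
  also have "\<dots> = emeasure M1 A"
    using marginal by (subst nn_integral_cong_AE[where v = "indicator A"]) auto
  finally show "emeasure (distr (density (M1 \<Otimes>\<^sub>M M2) f) M1 fst) A = emeasure M1 A" .
qed simp

lemma (in pair_sigma_finite) distr_snd_density:
  fixes f :: "'a \<times> 'b \<Rightarrow> ennreal"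
  assumes f [measurable]: "f \<in> borel_measurable (M1 \<Otimes>\<^sub>M M2)"
    and marginal: "AE y in M2. (\<integral>\<^sup>+x. f (x, y) \<partial>M1) = 1"
  shows "distr (density (M1 \<Otimes>\<^sub>M M2) f) M2 snd = M2"
proof (rule measure_eqI)
  fix B assume "B \<in> sets (distr (density (M1 \<Otimes>\<^sub>M M2) f) M2 snd)"
  then have B [measurable]: "B \<in> sets M2" by simp
  have "snd -` B \<inter> space (density (M1 \<Otimes>\<^sub>M M2) f) = space M1 \<times> B"
    using sets.sets_into_space[OF B] by (auto simp: space_pair_measure)
  then have "emeasure (distr (density (M1 \<Otimes>\<^sub>M M2) f) M2 snd) B
      = emeasure (density (M1 \<Otimes>\<^sub>M M2) f) (space M1 \<times> B)"
    by (simp add: emeasure_distr)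
  also have "\<dots> = (\<integral>\<^sup>+y. \<integral>\<^sup>+x. f (x, y) * indicator (space M1 \<times> B) (x, y) \<partial>M1 \<partial>M2)"
    by (simp add: emeasure_density nn_integral_snd[symmetric])
  also have "\<dots> = (\<integral>\<^sup>+y. indicator B y * (\<integral>\<^sup>+x. f (x, y) \<partial>M1) \<partial>M2)"
    by (intro nn_integral_cong) (auto simp: indicator_def intro!: nn_integral_cong)
  also have "\<dots> = emeasure M2 B"
    using marginal by (subst nn_integral_cong_AE[where v = "indicator B"]) auto
  finally show "emeasure (distr (density (M1 \<Otimes>\<^sub>M M2) f) M2 snd) B = emeasure M2 B" .
qed simp

lemma density_in_couplings:
  fixes P Q :: "(real ^ 'n::finite) measure" and f :: "(real ^ 'n) \<times> (real ^ 'n) \<Rightarrow> real"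
  assumes P: "prob_space P" "sets P = sets borel" and Q: "prob_space Q" "sets Q = sets borel"
    and f: "f \<in> borel_measurable borel" "\<And>z. 0 \<le> f z"
    and fst_marginal: "AE x in P. (\<integral>\<^sup>+y. ennreal (f (x, y)) \<partial>Q) = 1"
    and snd_marginal: "AE y in Q. (\<integral>\<^sup>+x. ennreal (f (x, y)) \<partial>P) = 1"
  shows "density (P \<Otimes>\<^sub>M Q) (\<lambda>z. ennreal (f z)) \<in> couplings P Q"
proof -
  interpret P: prob_space P by fact
  interpret Q: prob_space Q by fact
  interpret PQ: pair_sigma_finite P Q ..
  define M where "M = density (P \<Otimes>\<^sub>M Q) (\<lambda>z. ennreal (f z))"
  have sets_PQ: "sets (P \<Otimes>\<^sub>M Q) = sets borel"
    using P(2) Q(2) by (rule sets_pair_measure_borel)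
  have sets_M: "sets M = sets borel"
    unfolding M_def using sets_PQ by simp
  have f_PQ: "(\<lambda>z. ennreal (f z)) \<in> borel_measurable (P \<Otimes>\<^sub>M Q)"
    using f(1) unfolding measurable_cong_sets[OF sets_PQ refl] by simp
  have distr_fst: "distr M borel fst = P"
    using PQ.distr_fst_density[OF f_PQ fst_marginal] P(2)
    unfolding M_def by (metis distr_cong)
  have distr_snd: "distr M borel snd = Q"
    using PQ.distr_snd_density[OF f_PQ snd_marginal] Q(2)
    unfolding M_def by (metis distr_cong)
  have "prob_space M"
  proof
    have "fst \<in> measurable M borel"
      using borel_measurable_fst_snd_vec(1) by (simp only: measurable_cong_sets[OF sets_M refl])
    then have "emeasure M (space M) = emeasure (distr M borel fst) UNIV"
      using sets_eq_imp_space_eq[OF sets_M] by (simp add: emeasure_distr)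
    then show "emeasure M (space M) = 1"
      using distr_fst P.emeasure_space_1 sets_eq_imp_space_eq[OF P(2)] by simp
  qed
  then show ?thesis
    unfolding couplings_def M_def[symmetric] using sets_M distr_fst distr_snd by simp
qed

lemma couplings_nonempty:
  assumes "finite_first_moment P" "finite_first_moment Q"
  shows "couplings P Q \<noteq> {}"
proof -
  interpret P: prob_space P using finite_first_moment_prob_space[OF assms(1)] .
  interpret Q: prob_space Q using finite_first_moment_prob_space[OF assms(2)] .
  have "density (P \<Otimes>\<^sub>M Q) (\<lambda>z. ennreal 1) \<in> couplings P Q"
    using assms P.emeasure_space_1 Q.emeasure_space_1
    by (intro density_in_couplings) (auto simp: finite_first_moment_def)
  then show ?thesis by blast
qed

definition l1_cost :: "(real ^ 'n::finite) \<times> (real ^ 'n) \<Rightarrow> real" where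
  "l1_cost = (\<lambda>(x, y). l1norm (x - y))"

lemma wasserstein_eq_l1_cost: "wasserstein P Q = (INF M \<in> couplings P Q. integral\<^sup>L M l1_cost)"
  unfolding wasserstein_def l1_cost_def ..

lemma borel_measurable_l1_cost [measurable]:
  "l1_cost \<in> borel_measurable (borel :: ((real ^ 'n::finite) \<times> (real ^ 'n)) measure)"
proof -
  have "(\<lambda>z. l1norm (fst z - snd z)) \<in> borel_measurable (borel :: ((real ^ 'n) \<times> (real ^ 'n)) measure)"
    by (intro measurable_compose[OF _ borel_measurable_l1norm] borel_measurable_continuous_onI
        continuous_intros)
  then show ?thesis by (simp add: l1_cost_def case_prod_beta')
qed

lemma l1_cost_nonneg: "0 \<le> l1_cost z"
  unfolding l1_cost_def by (simp add: case_prod_beta l1norm_nonneg)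

lemma integrable_l1_cost:
  assumes P: "finite_first_moment P" and Q: "finite_first_moment Q" and M: "M \<in> couplings P Q"
  shows "integrable M l1_cost"
proof (rule Bochner_Integration.integrable_bound)
  show "integrable M (\<lambda>z. l1norm (fst z) + l1norm (snd z))"
    using integrable_coupling_fst[OF M _ finite_first_moment_integrable[OF P]]
      integrable_coupling_snd[OF M _ finite_first_moment_integrable[OF Q]] by simp
  show "l1_cost \<in> borel_measurable M" by (rule coupling_measurable[OF M]) simp
  show "AE z in M. norm (l1_cost z) \<le> norm (l1norm (fst z) + l1norm (snd z))"
    by (intro AE_I2) (simp add: l1_cost_def case_prod_beta l1norm_nonneg l1norm_diff_le)
qed

lemma wasserstein_le_coupling:
  assumes "M \<in> couplings P Q"
  shows "wasserstein P Q \<le> integral\<^sup>L M l1_cost"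
proof -
  have "bdd_below ((\<lambda>M. integral\<^sup>L M l1_cost) ` couplings P Q)"
    by (intro bdd_belowI2[of _ 0] Bochner_Integration.integral_nonneg l1_cost_nonneg)
  then show ?thesis
    unfolding wasserstein_eq_l1_cost using assms by (rule cINF_lower)
qed

lemma wasserstein_nonneg:
  assumes "finite_first_moment P" "finite_first_moment Q"
  shows "0 \<le> wasserstein P Q"
  unfolding wasserstein_eq_l1_cost
  by (intro cINF_greatest couplings_nonempty[OF assms] Bochner_Integration.integral_nonneg l1_cost_nonneg)

lemma abs_integral_diff_le_wasserstein:
  fixes f :: "real ^ 'n::finite \<Rightarrow> real"
  assumes P: "finite_first_moment P" and Q: "finite_first_moment Q"
    and f: "f \<in> borel_measurable borel" and L: "0 < L"
    and lip: "\<And>y z. \<bar>f y - f z\<bar> \<le> L * l1norm (y - z)"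
  shows "\<bar>integral\<^sup>L P f - integral\<^sup>L Q f\<bar> \<le> L * wasserstein P Q"
proof -
  have "\<bar>integral\<^sup>L P f - integral\<^sup>L Q f\<bar> / L \<le> integral\<^sup>L M l1_cost"
    if M: "M \<in> couplings P Q" for M
  proof -
    have int_fst: "integrable M (\<lambda>z. f (fst z))"
      using integrable_coupling_fst[OF M f integrable_lipschitz[OF P f lip]] .
    have int_snd: "integrable M (\<lambda>z. f (snd z))"
      using integrable_coupling_snd[OF M f integrable_lipschitz[OF Q f lip]] .
    have "\<bar>integral\<^sup>L P f - integral\<^sup>L Q f\<bar> = \<bar>\<integral>z. f (fst z) - f (snd z) \<partial>M\<bar>"
      using int_fst int_snd by (simp add: integral_coupling_fst[OF M f] integral_coupling_snd[OF M f])
    also have "\<dots> \<le> (\<integral>z. \<bar>f (fst z) - f (snd z)\<bar> \<partial>M)"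
      using integral_abs_bound by simp
    also have "\<dots> \<le> (\<integral>z. L * l1_cost z \<partial>M)"
    proof (rule integral_mono)
      show "\<bar>f (fst z) - f (snd z)\<bar> \<le> L * l1_cost z" for z
        using lip by (simp add: l1_cost_def case_prod_beta)
    qed (use int_fst int_snd integrable_l1_cost[OF P Q M] in auto)
    also have "\<dots> = L * integral\<^sup>L M l1_cost" by simp
    finally show ?thesis using L by (simp add: divide_le_eq mult.commute)
  qed
  then have "\<bar>integral\<^sup>L P f - integral\<^sup>L Q f\<bar> / L \<le> wasserstein P Q"
    unfolding wasserstein_eq_l1_cost by (intro cINF_greatest couplings_nonempty[OF P Q])
  then show ?thesis using L by (simp add: divide_le_eq mult.commute)
qed

lemma Fnorm_tendsto_of_wasserstein:
  assumes Fs: "\<And>n. condH (Fs n)" and F: "condH F"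
    and W: "(\<lambda>n. wasserstein (Fs n) F) \<longlonglongrightarrow> 0"
  shows "(\<lambda>n. Fnorm (Fs n) x0 x) \<longlonglongrightarrow> Fnorm F x0 x"
proof -
  have lip: "\<bar>Fnorm_integrand x0 x y - Fnorm_integrand x0 x z\<bar> \<le> (1 + l1norm x) * l1norm (y - z)"
    for y z
  proof -
    have "l1norm x * l1norm (y - z) \<le> (1 + l1norm x) * l1norm (y - z)"
      by (intro mult_right_mono) (simp_all add: l1norm_nonneg)
    then show ?thesis using Fnorm_integrand_lipschitz[of x0 x y z] by linarith
  qed
  have bound: "\<bar>Fnorm (Fs n) x0 x - Fnorm F x0 x\<bar> \<le> (1 + l1norm x) * wasserstein (Fs n) F" for n
    unfolding Fnorm_eq_integral
    using condH_imp_finite_first_moment[OF Fs] condH_imp_finite_first_moment[OF F] lip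
      l1norm_nonneg[of x]
    by (intro abs_integral_diff_le_wasserstein) simp_all
  have "(\<lambda>n. Fnorm (Fs n) x0 x - Fnorm F x0 x) \<longlonglongrightarrow> 0"
  proof (rule Lim_null_comparison)
    show "\<forall>\<^sub>F n in sequentially. norm (Fnorm (Fs n) x0 x - Fnorm F x0 x)
        \<le> (1 + l1norm x) * wasserstein (Fs n) F"
      using bound by simp
    show "(\<lambda>n. (1 + l1norm x) * wasserstein (Fs n) F) \<longlonglongrightarrow> 0"
      using tendsto_mult_right_zero[OF W] .
  qed
  then show ?thesis by (rule LIM_zero_cancel)
qed

section \<open>A coupling adapted to finitely many cells\<close>

lemma (in pair_sigma_finite)
  fixes f :: "'a \<Rightarrow> real" and g :: "'b \<Rightarrow> real"
  assumes f: "integrable M1 f" "\<And>x. 0 \<le> f x" and g: "integrable M2 g" "\<And>y. 0 \<le> g y"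
  shows integrable_mult_fst_snd: "integrable (M1 \<Otimes>\<^sub>M M2) (\<lambda>z. f (fst z) * g (snd z))"
    and integral_mult_fst_snd:
      "(\<integral>z. f (fst z) * g (snd z) \<partial>(M1 \<Otimes>\<^sub>M M2)) = integral\<^sup>L M1 f * integral\<^sup>L M2 g"
proof -
  have [measurable]: "f \<in> borel_measurable M1" "g \<in> borel_measurable M2"
    using f g by auto
  have "(\<integral>\<^sup>+z. ennreal (f (fst z) * g (snd z)) \<partial>(M1 \<Otimes>\<^sub>M M2))
      = (\<integral>\<^sup>+x. \<integral>\<^sup>+y. ennreal (f x) * ennreal (g y) \<partial>M2 \<partial>M1)"
    by (subst M2.nn_integral_fst[symmetric]) (auto simp: ennreal_mult f(2) g(2))
  also have "\<dots> = (\<integral>\<^sup>+x. ennreal (f x) \<partial>M1) * (\<integral>\<^sup>+y. ennreal (g y) \<partial>M2)"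
    by (simp add: nn_integral_cmult nn_integral_multc)
  also have "\<dots> = ennreal (integral\<^sup>L M1 f * integral\<^sup>L M2 g)"
    using f g by (simp add: nn_integral_eq_integral ennreal_mult)
  finally have "integrable (M1 \<Otimes>\<^sub>M M2) (\<lambda>z. f (fst z) * g (snd z)) \<and>
      (\<integral>z. f (fst z) * g (snd z) \<partial>(M1 \<Otimes>\<^sub>M M2)) = integral\<^sup>L M1 f * integral\<^sup>L M2 g"
    using f g by (subst nn_integral_eq_integrable[symmetric]) auto
  then show "integrable (M1 \<Otimes>\<^sub>M M2) (\<lambda>z. f (fst z) * g (snd z))"
    and "(\<integral>z. f (fst z) * g (snd z) \<partial>(M1 \<Otimes>\<^sub>M M2)) = integral\<^sup>L M1 f * integral\<^sup>L M2 g"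
    by auto
qed

locale disjoint_cells =
  fixes K :: "'k set" and C :: "'k \<Rightarrow> (real ^ 'n::finite) set"
  assumes finite_K: "finite K" and sets_C [measurable]: "\<And>k. C k \<in> sets borel"
    and disjoint_C: "disjoint_family_on C K"
begin

definition common_mass :: "(real ^ 'n) measure \<Rightarrow> (real ^ 'n) measure \<Rightarrow> 'k \<Rightarrow> real" where
  "common_mass P Q k = min (measure P (C k)) (measure Q (C k))"

definition residual :: "(real ^ 'n) measure \<Rightarrow> (real ^ 'n) measure \<Rightarrow> real ^ 'n \<Rightarrow> real" where
  "residual P Q x = 1 - (\<Sum>k\<in>K. common_mass P Q k / measure P (C k) * indicator (C k) x)"

definition residual_mass :: "(real ^ 'n) measure \<Rightarrow> (real ^ 'n) measure \<Rightarrow> real" where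
  "residual_mass P Q = 1 - (\<Sum>k\<in>K. common_mass P Q k)"

text \<open>The common mass of each cell is coupled inside the cell, the residual masses independently.
  A division is by zero only where the term containing it vanishes (almost everywhere), so the
  junk value 0 is harmless.\<close>

definition diagonal_density ::
    "(real ^ 'n) measure \<Rightarrow> (real ^ 'n) measure \<Rightarrow> real ^ 'n \<Rightarrow> real ^ 'n \<Rightarrow> real" where
  "diagonal_density P Q x y = (\<Sum>k\<in>K. common_mass P Q k / (measure P (C k) * measure Q (C k))
     * (indicator (C k) x * indicator (C k) y))"

definition independent_density ::
    "(real ^ 'n) measure \<Rightarrow> (real ^ 'n) measure \<Rightarrow> real ^ 'n \<Rightarrow> real ^ 'n \<Rightarrow> real" where
  "independent_density P Q x y = residual P Q x * residual Q P y / residual_mass P Q"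

definition coupling_density ::
    "(real ^ 'n) measure \<Rightarrow> (real ^ 'n) measure \<Rightarrow> real ^ 'n \<Rightarrow> real ^ 'n \<Rightarrow> real" where
  "coupling_density P Q x y = diagonal_density P Q x y + independent_density P Q x y"

lemma common_mass_commute: "common_mass Q P k = common_mass P Q k"
  unfolding common_mass_def by (rule min.commute)

lemma residual_mass_commute: "residual_mass Q P = residual_mass P Q"
  unfolding residual_mass_def by (simp add: common_mass_commute)

lemma coupling_density_commute: "coupling_density Q P y x = coupling_density P Q x y"
  unfolding coupling_density_def diagonal_density_def independent_density_def
  by (simp add: common_mass_commute residual_mass_commute ac_simps)

lemma common_mass_nonneg: "0 \<le> common_mass P Q k"
  unfolding common_mass_def by simp

lemma common_mass_le: "common_mass P Q k \<le> measure P (C k)"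
  unfolding common_mass_def by simp

lemma common_mass_ratio_bounds:
  "0 \<le> common_mass P Q k / measure P (C k)" "common_mass P Q k / measure P (C k) \<le> 1"
  using common_mass_nonneg[of P Q k] common_mass_le[of P Q k]
  by (auto simp: divide_le_eq_1)

lemma common_mass_ratio_mult: "common_mass P Q k / measure P (C k) * measure P (C k) = common_mass P Q k"
  using common_mass_nonneg[of P Q k] common_mass_le[of P Q k]
  by (cases "measure P (C k) = 0") auto

lemma common_mass_product_ratio_mult:
  "common_mass P Q k / (measure P (C k) * measure Q (C k)) * measure Q (C k)
    = common_mass P Q k / measure P (C k)"
  using common_mass_nonneg[of P Q k] common_mass_le[of Q P k] common_mass_commute[of Q P k]
  by (cases "measure Q (C k) = 0") auto

lemma residual_in_cell:
  assumes "k \<in> K" "x \<in> C k"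
  shows "residual P Q x = 1 - common_mass P Q k / measure P (C k)"
  unfolding residual_def
  by (subst sum_indicator_disjoint_family[OF disjoint_C assms(2) finite_K assms(1)]) (rule refl)

lemma residual_outside_cells:
  assumes "\<And>k. k \<in> K \<Longrightarrow> x \<notin> C k"
  shows "residual P Q x = 1"
  unfolding residual_def using assms by (simp add: sum.neutral)

lemma residual_bounds: "0 \<le> residual P Q x" "residual P Q x \<le> 1"
proof -
  have "0 \<le> residual P Q x \<and> residual P Q x \<le> 1"
  proof (cases "\<exists>k\<in>K. x \<in> C k")
    case True
    then obtain k where "k \<in> K" "x \<in> C k" by blast
    then show ?thesis using residual_in_cell common_mass_ratio_bounds[of P Q k] by simp
  next
    case False
    then show ?thesis using residual_outside_cells by auto
  qed
  then show "0 \<le> residual P Q x" "residual P Q x \<le> 1" by auto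
qed

lemma borel_measurable_residual [measurable]: "residual P Q \<in> borel_measurable borel"
  unfolding residual_def[abs_def] by measurable

lemma
  assumes "prob_space P" "sets P = sets borel"
  shows integrable_indicator_cell: "integrable P (indicator (C k) :: _ \<Rightarrow> real)"
    and integral_indicator_cell: "integral\<^sup>L P (indicator (C k)) = measure P (C k)"
proof -
  interpret prob_space P by fact
  show "integrable P (indicator (C k) :: _ \<Rightarrow> real)"
    using assms(2) by (intro integrable_real_indicator) (auto simp: emeasure_eq_measure)
  show "integral\<^sup>L P (indicator (C k)) = measure P (C k)"
    using sets_eq_imp_space_eq[OF assms(2)] by simp
qed

lemma
  assumes "prob_space P" "sets P = sets borel"
  shows integrable_residual: "integrable P (residual P Q)"
    and integral_residual: "integral\<^sup>L P (residual P Q) = residual_mass P Q"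
proof -
  interpret prob_space P by fact
  note indicator = integrable_indicator_cell[OF assms] integral_indicator_cell[OF assms]
  show "integrable P (residual P Q)"
    unfolding residual_def[abs_def] using indicator by auto
  have "integral\<^sup>L P (residual P Q)
      = 1 - (\<Sum>k\<in>K. common_mass P Q k / measure P (C k) * measure P (C k))"
    unfolding residual_def[abs_def] using indicator
    by (simp add: Bochner_Integration.integral_sum prob_space)
  then show "integral\<^sup>L P (residual P Q) = residual_mass P Q"
    unfolding residual_mass_def common_mass_ratio_mult .
qed

lemma residual_mass_nonneg:
  assumes "prob_space P" "sets P = sets borel"
  shows "0 \<le> residual_mass P Q"
  using integral_residual[OF assms, of Q] residual_bounds(1)
  by (metis Bochner_Integration.integral_nonneg)

lemma diagonal_density_nonneg: "0 \<le> diagonal_density P Q x y"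
  unfolding diagonal_density_def using common_mass_nonneg
  by (intro sum_nonneg mult_nonneg_nonneg divide_nonneg_nonneg) auto

lemma independent_density_nonneg:
  assumes "prob_space P" "sets P = sets borel"
  shows "0 \<le> independent_density P Q x y"
  unfolding independent_density_def using residual_mass_nonneg[OF assms] residual_bounds
  by (intro divide_nonneg_nonneg mult_nonneg_nonneg) auto

lemma coupling_density_nonneg:
  assumes "prob_space P" "sets P = sets borel"
  shows "0 \<le> coupling_density P Q x y"
  unfolding coupling_density_def
  using diagonal_density_nonneg independent_density_nonneg[OF assms] by (rule add_nonneg_nonneg)

lemma borel_measurable_coupling_density:
  "(\<lambda>z. coupling_density P Q (fst z) (snd z)) \<in> borel_measurable borel"
proof -
  have "(\<lambda>z. coupling_density P Q (fst z) (snd z)) \<in> borel_measurable (borel \<Otimes>\<^sub>M borel)"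
    unfolding coupling_density_def diagonal_density_def independent_density_def by measurable
  then show ?thesis by (simp only: borel_prod)
qed

lemma
  assumes "prob_space Q" "sets Q = sets borel"
  shows integrable_coupling_density: "integrable Q (coupling_density P Q x)"
    and integral_coupling_density: "integral\<^sup>L Q (coupling_density P Q x)
      = 1 - residual P Q x + residual P Q x / residual_mass P Q * residual_mass P Q"
proof -
  note indicator = integrable_indicator_cell[OF assms] integral_indicator_cell[OF assms]
  let ?w = "\<lambda>k. common_mass P Q k / (measure P (C k) * measure Q (C k)) * indicator (C k) x"
  have diagonal_eq: "diagonal_density P Q x = (\<lambda>y. \<Sum>k\<in>K. ?w k * indicator (C k) y)"
    unfolding diagonal_density_def by (auto simp: ac_simps)
  have independent_eq:
    "independent_density P Q x = (\<lambda>y. residual P Q x / residual_mass P Q * residual Q P y)"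
    unfolding independent_density_def by auto
  have int_diagonal: "integrable Q (diagonal_density P Q x)"
    unfolding diagonal_eq using indicator by auto
  have int_independent: "integrable Q (independent_density P Q x)"
    unfolding independent_eq using integrable_residual[OF assms] by auto
  show "integrable Q (coupling_density P Q x)"
    unfolding coupling_density_def[abs_def] using int_diagonal int_independent by auto
  have cell_term: "?w k * measure Q (C k) = common_mass P Q k / measure P (C k) * indicator (C k) x"
    for k
  proof -
    have "?w k * measure Q (C k)
        = common_mass P Q k / (measure P (C k) * measure Q (C k)) * measure Q (C k) * indicator (C k) x"
      by (simp only: mult_ac)
    then show ?thesis by (simp only: common_mass_product_ratio_mult)
  qed
  have "integral\<^sup>L Q (diagonal_density P Q x) = (\<Sum>k\<in>K. ?w k * measure Q (C k))"
    unfolding diagonal_eq using indicator by (simp add: Bochner_Integration.integral_sum)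
  also have "\<dots> = 1 - residual P Q x"
    unfolding cell_term residual_def by simp
  finally have "integral\<^sup>L Q (diagonal_density P Q x) = 1 - residual P Q x" .
  moreover have "integral\<^sup>L Q (independent_density P Q x)
      = residual P Q x / residual_mass P Q * residual_mass P Q"
    unfolding independent_eq using integral_residual[OF assms, of P] by (simp add: residual_mass_commute)
  ultimately show "integral\<^sup>L Q (coupling_density P Q x)
      = 1 - residual P Q x + residual P Q x / residual_mass P Q * residual_mass P Q"
    unfolding coupling_density_def[abs_def] using int_diagonal int_independent by simp
qed

lemma nn_integral_coupling_density:
  assumes P: "prob_space P" "sets P = sets borel" and Q: "prob_space Q" "sets Q = sets borel"
  shows "AE x in P. (\<integral>\<^sup>+y. ennreal (coupling_density P Q x y) \<partial>Q) = 1"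
proof -
  have "AE x in P. residual P Q x / residual_mass P Q * residual_mass P Q = residual P Q x"
  proof (cases "residual_mass P Q = 0")
    case True
    then have "AE x in P. residual P Q x = 0"
      using integral_residual[OF P, of Q] integrable_residual[OF P, of Q] residual_bounds
      by (subst integral_nonneg_eq_0_iff_AE[symmetric]) auto
    then show ?thesis by eventually_elim simp
  qed simp
  then show ?thesis
  proof eventually_elim
    case (elim x)
    have "(\<integral>\<^sup>+y. ennreal (coupling_density P Q x y) \<partial>Q) = ennreal (integral\<^sup>L Q (coupling_density P Q x))"
      using integrable_coupling_density[OF Q] coupling_density_nonneg[OF P]
      by (intro nn_integral_eq_integral) auto
    then show ?case using integral_coupling_density[OF Q, of P x] elim by simp
  qed
qed

lemma coupling_density_in_couplings:
  assumes P: "prob_space P" "sets P = sets borel" and Q: "prob_space Q" "sets Q = sets borel"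
  shows "density (P \<Otimes>\<^sub>M Q) (\<lambda>z. ennreal (coupling_density P Q (fst z) (snd z))) \<in> couplings P Q"
proof (rule density_in_couplings[OF P Q borel_measurable_coupling_density])
  show "0 \<le> coupling_density P Q (fst z) (snd z)" for z
    by (rule coupling_density_nonneg[OF P])
  show "AE x in P. (\<integral>\<^sup>+y. ennreal (coupling_density P Q (fst (x, y)) (snd (x, y))) \<partial>Q) = 1"
    using nn_integral_coupling_density[OF P Q] by simp
  show "AE y in Q. (\<integral>\<^sup>+x. ennreal (coupling_density P Q (fst (x, y)) (snd (x, y))) \<partial>P) = 1"
    using nn_integral_coupling_density[OF Q P] by (simp add: coupling_density_commute)
qed

lemma integrable_residual_l1norm:
  assumes P: "finite_first_moment P"
  shows "integrable P (\<lambda>x. residual P Q x * l1norm x)"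
proof (rule Bochner_Integration.integrable_bound[OF finite_first_moment_integrable[OF P]])
  have "(\<lambda>x. residual P Q x * l1norm x) \<in> borel_measurable borel" by measurable
  then show "(\<lambda>x. residual P Q x * l1norm x) \<in> borel_measurable P"
    by (rule finite_first_moment_measurable[OF P])
  show "AE x in P. norm (residual P Q x * l1norm x) \<le> norm (l1norm x)"
    using residual_bounds l1norm_nonneg
    by (intro AE_I2) (simp add: abs_mult mult_left_le_one_le)
qed

text \<open>The diagonal part vanishes unless \<open>x\<close> and \<open>y\<close> lie in a common cell.\<close>

lemma coupling_density_mult_l1norm_le:
  assumes P: "prob_space P" "sets P = sets borel"
    and diam: "\<And>k x y. k \<in> K \<Longrightarrow> x \<in> C k \<Longrightarrow> y \<in> C k \<Longrightarrow> l1norm (x - y) \<le> D"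
    and D: "0 \<le> D"
  shows "coupling_density P Q x y * l1norm (x - y)
    \<le> D * diagonal_density P Q x y + independent_density P Q x y * (l1norm x + l1norm y)"
proof -
  let ?w = "\<lambda>k. common_mass P Q k / (measure P (C k) * measure Q (C k))"
  have "?w k * (indicator (C k) x * indicator (C k) y) * l1norm (x - y)
      \<le> D * (?w k * (indicator (C k) x * indicator (C k) y))" if "k \<in> K" for k
  proof (cases "x \<in> C k \<and> y \<in> C k")
    case True
    have "0 \<le> ?w k" using common_mass_nonneg[of P Q k] by simp
    with True have "l1norm (x - y) * ?w k \<le> D * ?w k"
      using diam[OF that] by (intro mult_right_mono) auto
    then show ?thesis using True by (simp add: ac_simps)
  qed auto
  then have "diagonal_density P Q x y * l1norm (x - y) \<le> D * diagonal_density P Q x y"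
    unfolding diagonal_density_def sum_distrib_left sum_distrib_right by (rule sum_mono)
  moreover have "independent_density P Q x y * l1norm (x - y)
      \<le> independent_density P Q x y * (l1norm x + l1norm y)"
    using l1norm_diff_le independent_density_nonneg[OF P] by (rule mult_left_mono)
  ultimately show ?thesis
    unfolding coupling_density_def distrib_right by (rule add_mono)
qed

lemma
  assumes P: "prob_space P" "sets P = sets borel" and Q: "prob_space Q" "sets Q = sets borel"
  shows integrable_diagonal_density: "integrable (P \<Otimes>\<^sub>M Q) (\<lambda>z. diagonal_density P Q (fst z) (snd z))"
    and integral_diagonal_density:
      "(\<integral>z. diagonal_density P Q (fst z) (snd z) \<partial>(P \<Otimes>\<^sub>M Q)) = 1 - residual_mass P Q"
proof -
  interpret P: prob_space P by fact
  interpret Q: prob_space Q by fact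
  interpret PQ: pair_sigma_finite P Q ..
  note cells = PQ.integrable_mult_fst_snd[OF integrable_indicator_cell[OF P] _ integrable_indicator_cell[OF Q]]
    PQ.integral_mult_fst_snd[OF integrable_indicator_cell[OF P] _ integrable_indicator_cell[OF Q]]
  show "integrable (P \<Otimes>\<^sub>M Q) (\<lambda>z. diagonal_density P Q (fst z) (snd z))"
    unfolding diagonal_density_def using cells by simp
  have space: "space P = UNIV" "space Q = UNIV"
    using sets_eq_imp_space_eq[OF P(2)] sets_eq_imp_space_eq[OF Q(2)] by simp_all
  have "(\<integral>z. diagonal_density P Q (fst z) (snd z) \<partial>(P \<Otimes>\<^sub>M Q))
      = (\<Sum>k\<in>K. common_mass P Q k / (measure P (C k) * measure Q (C k))
          * (measure P (C k) * measure Q (C k)))"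
    unfolding diagonal_density_def using cells by (simp add: space)
  also have "\<dots> = (\<Sum>k\<in>K. common_mass P Q k)"
  proof (rule sum.cong[OF refl])
    fix k
    show "common_mass P Q k / (measure P (C k) * measure Q (C k)) * (measure P (C k) * measure Q (C k))
        = common_mass P Q k"
      using common_mass_nonneg[of P Q k] common_mass_le[of P Q k]
        common_mass_le[of Q P k] common_mass_commute[of Q P k]
      by (cases "measure P (C k) * measure Q (C k) = 0") auto
  qed
  finally show "(\<integral>z. diagonal_density P Q (fst z) (snd z) \<partial>(P \<Otimes>\<^sub>M Q)) = 1 - residual_mass P Q"
    unfolding residual_mass_def by simp
qed

lemma
  assumes P: "finite_first_moment P" and Q: "finite_first_moment Q"
  shows integrable_independent_density_l1norm: "integrable (P \<Otimes>\<^sub>M Q)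
      (\<lambda>z. independent_density P Q (fst z) (snd z) * (l1norm (fst z) + l1norm (snd z)))"
    and integral_independent_density_l1norm_le:
      "(\<integral>z. independent_density P Q (fst z) (snd z) * (l1norm (fst z) + l1norm (snd z)) \<partial>(P \<Otimes>\<^sub>M Q))
      \<le> (\<integral>x. residual P Q x * l1norm x \<partial>P) + (\<integral>y. residual Q P y * l1norm y \<partial>Q)"
proof -
  have P': "prob_space P" "sets P = sets borel" and Q': "prob_space Q" "sets Q = sets borel"
    using P Q by (simp_all add: finite_first_moment_prob_space finite_first_moment_sets)
  interpret P: prob_space P by fact
  interpret Q: prob_space Q by fact
  interpret PQ: pair_sigma_finite P Q ..
  let ?r = "residual_mass P Q"
  let ?IP = "\<integral>x. residual P Q x * l1norm x \<partial>P" and ?IQ = "\<integral>y. residual Q P y * l1norm y \<partial>Q"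
  have nonneg: "0 \<le> residual R S x * l1norm x" for R S x
    by (intro mult_nonneg_nonneg residual_bounds(1) l1norm_nonneg)
  note left = PQ.integrable_mult_fst_snd[OF integrable_residual_l1norm[OF P] nonneg
      integrable_residual[OF Q'] residual_bounds(1)]
    PQ.integral_mult_fst_snd[OF integrable_residual_l1norm[OF P] nonneg
      integrable_residual[OF Q'] residual_bounds(1)]
  note right = PQ.integrable_mult_fst_snd[OF integrable_residual[OF P'] residual_bounds(1)
      integrable_residual_l1norm[OF Q] nonneg]
    PQ.integral_mult_fst_snd[OF integrable_residual[OF P'] residual_bounds(1)
      integrable_residual_l1norm[OF Q] nonneg]
  have eq: "independent_density P Q (fst z) (snd z) * (l1norm (fst z) + l1norm (snd z))
      = (residual P Q (fst z) * l1norm (fst z)) * residual Q P (snd z) / ?r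
        + residual P Q (fst z) * (residual Q P (snd z) * l1norm (snd z)) / ?r" for z
    unfolding independent_density_def by (simp add: divide_inverse algebra_simps)
  show "integrable (P \<Otimes>\<^sub>M Q)
      (\<lambda>z. independent_density P Q (fst z) (snd z) * (l1norm (fst z) + l1norm (snd z)))"
    unfolding eq using left(1) right(1) by simp
  have "(\<integral>z. independent_density P Q (fst z) (snd z) * (l1norm (fst z) + l1norm (snd z)) \<partial>(P \<Otimes>\<^sub>M Q))
      = ?IP * ?r / ?r + ?r * ?IQ / ?r"
    unfolding eq using left right
    by (simp add: integral_residual[OF P'] integral_residual[OF Q'] residual_mass_commute)
  also have "\<dots> \<le> ?IP + ?IQ"
    using nonneg by (cases "?r = 0") simp_all
  finally show "(\<integral>z. independent_density P Q (fst z) (snd z) * (l1norm (fst z) + l1norm (snd z))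
      \<partial>(P \<Otimes>\<^sub>M Q)) \<le> ?IP + ?IQ" .
qed

lemma wasserstein_le_cells:
  assumes P: "finite_first_moment P" and Q: "finite_first_moment Q"
    and diam: "\<And>k x y. k \<in> K \<Longrightarrow> x \<in> C k \<Longrightarrow> y \<in> C k \<Longrightarrow> l1norm (x - y) \<le> D"
    and D: "0 \<le> D"
  shows "wasserstein P Q
    \<le> D + (\<integral>x. residual P Q x * l1norm x \<partial>P) + (\<integral>y. residual Q P y * l1norm y \<partial>Q)"
proof -
  have P': "prob_space P" "sets P = sets borel" and Q': "prob_space Q" "sets Q = sets borel"
    using P Q by (simp_all add: finite_first_moment_prob_space finite_first_moment_sets)
  let ?f = "\<lambda>z. coupling_density P Q (fst z) (snd z)"
  let ?G = "\<lambda>z. D * diagonal_density P Q (fst z) (snd z)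
    + independent_density P Q (fst z) (snd z) * (l1norm (fst z) + l1norm (snd z))"
  define M where "M = density (P \<Otimes>\<^sub>M Q) (\<lambda>z. ennreal (?f z))"
  have M: "M \<in> couplings P Q"
    unfolding M_def by (rule coupling_density_in_couplings[OF P' Q'])
  have sets_PQ: "sets (P \<Otimes>\<^sub>M Q) = sets borel"
    using P'(2) Q'(2) by (rule sets_pair_measure_borel)
  have measurable_PQ: "g \<in> borel_measurable (P \<Otimes>\<^sub>M Q)" if "g \<in> borel_measurable borel"
    for g :: "_ \<Rightarrow> real"
    using that unfolding measurable_cong_sets[OF sets_PQ refl] .
  have f_cost_le_G: "?f z * l1_cost z \<le> ?G z" for z
    using coupling_density_mult_l1norm_le[OF P' diam D] by (simp add: l1_cost_def case_prod_beta)
  have "wasserstein P Q \<le> integral\<^sup>L M l1_cost" by (rule wasserstein_le_coupling[OF M])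
  also have "\<dots> = (\<integral>z. ?f z * l1_cost z \<partial>(P \<Otimes>\<^sub>M Q))"
    unfolding M_def using coupling_density_nonneg[OF P']
    by (subst integral_density) (auto intro: measurable_PQ borel_measurable_coupling_density)
  also have "\<dots> \<le> integral\<^sup>L (P \<Otimes>\<^sub>M Q) ?G"
  proof (rule integral_mono_AE')
    show "integrable (P \<Otimes>\<^sub>M Q) ?G"
      using integrable_diagonal_density[OF P' Q'] integrable_independent_density_l1norm[OF P Q] by auto
    show "AE z in P \<Otimes>\<^sub>M Q. ?f z * l1_cost z \<le> ?G z"
      using f_cost_le_G by simp
    have "0 \<le> ?f z * l1_cost z" for z
      using coupling_density_nonneg[OF P'] l1_cost_nonneg by (rule mult_nonneg_nonneg)
    then show "AE z in P \<Otimes>\<^sub>M Q. 0 \<le> ?G z"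
      using f_cost_le_G order_trans by blast
  qed
  also have "\<dots> \<le> D * (1 - residual_mass P Q)
      + ((\<integral>x. residual P Q x * l1norm x \<partial>P) + (\<integral>y. residual Q P y * l1norm y \<partial>Q))"
    using integrable_diagonal_density[OF P' Q'] integrable_independent_density_l1norm[OF P Q]
      integral_diagonal_density[OF P' Q'] integral_independent_density_l1norm_le[OF P Q]
    by simp
  also have "D * (1 - residual_mass P Q) \<le> D"
    using D residual_mass_nonneg[OF P'] by (simp add: mult_left_le)
  finally show ?thesis by linarith
qed

end

section \<open>Distribution functions from F-norms\<close>

lemma tendsto_squeeze_limits:
  fixes a :: "'b \<Rightarrow> 'a::linorder_topology"
  assumes lower: "\<And>k. \<forall>\<^sub>F n in F. lo k n \<le> a n" and upper: "\<And>k. \<forall>\<^sub>F n in F. a n \<le> hi k n"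
    and lo_lim: "\<And>k. (lo k \<longlongrightarrow> Lo k) F" and hi_lim: "\<And>k. (hi k \<longlongrightarrow> Hi k) F"
    and Lo_lim: "Lo \<longlonglongrightarrow> L" and Hi_lim: "Hi \<longlonglongrightarrow> L"
  shows "(a \<longlongrightarrow> L) F"
proof (rule order_tendstoI)
  fix u assume "L < u"
  from order_tendstoD(2)[OF Hi_lim this] obtain k where "Hi k < u"
    by (auto simp: eventually_sequentially)
  with order_tendstoD(2)[OF hi_lim] have "\<forall>\<^sub>F n in F. hi k n < u" by blast
  with upper[of k] show "\<forall>\<^sub>F n in F. a n < u"
    by eventually_elim (rule le_less_trans)
next
  fix l assume "l < L"
  from order_tendstoD(1)[OF Lo_lim this] obtain k where "l < Lo k"
    by (auto simp: eventually_sequentially)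
  with order_tendstoD(1)[OF lo_lim] have "\<forall>\<^sub>F n in F. l < lo k n" by blast
  with lower[of k] show "\<forall>\<^sub>F n in F. l < a n"
    by eventually_elim (rule less_le_trans)
qed

definition ramp :: "real \<Rightarrow> real \<Rightarrow> real \<Rightarrow> real" where
  "ramp s h z = (max (s + h) z - max s z) / h"

lemma ramp_bounds:
  assumes "0 < h"
  shows "indicator {..s} z \<le> ramp s h z" "ramp s h z \<le> indicator {..s + h} z"
  using assms by (auto simp: ramp_def indicator_def field_simps)

lemma
  fixes M :: "real measure"
  assumes "integrable M (max (s + h))" "integrable M (max s)"
  shows integrable_ramp: "integrable M (ramp s h)"
    and integral_ramp: "integral\<^sup>L M (ramp s h) = (integral\<^sup>L M (max (s + h)) - integral\<^sup>L M (max s)) / h"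
  using assms by (simp_all add: ramp_def[abs_def])

lemma (in real_distribution)
  assumes "integrable M (ramp s h)" "0 < h"
  shows cdf_le_integral_ramp: "cdf M s \<le> integral\<^sup>L M (ramp s h)"
    and integral_ramp_le_cdf: "integral\<^sup>L M (ramp s h) \<le> cdf M (s + h)"
proof -
  have indicator: "integrable M (indicator {..t} :: real \<Rightarrow> real)" for t
    by (intro integrable_real_indicator) (auto simp: emeasure_eq_measure)
  have cdf_eq: "cdf M t = integral\<^sup>L M (indicator {..t})" for t
    by (simp add: cdf_def)
  show "cdf M s \<le> integral\<^sup>L M (ramp s h)"
    unfolding cdf_eq using assms indicator ramp_bounds(1) by (intro integral_mono) auto
  show "integral\<^sup>L M (ramp s h) \<le> cdf M (s + h)"
    unfolding cdf_eq using assms indicator ramp_bounds(2) by (intro integral_mono) auto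
qed

lemma (in real_distribution) integral_ramp_tendsto_cdf:
  assumes cont: "isCont (cdf M) s" and h: "h \<longlonglongrightarrow> 0" "\<And>k. 0 < h k"
    and int_upper: "\<And>k. integrable M (ramp s (h k))"
    and int_lower: "\<And>k. integrable M (ramp (s - h k) (h k))"
  shows "(\<lambda>k. integral\<^sup>L M (ramp s (h k))) \<longlonglongrightarrow> cdf M s"
    and "(\<lambda>k. integral\<^sup>L M (ramp (s - h k) (h k))) \<longlonglongrightarrow> cdf M s"
proof -
  have cdf_lim: "(\<lambda>k. cdf M (s + c * h k)) \<longlonglongrightarrow> cdf M s" for c
    using isCont_tendsto_compose[OF cont, of "\<lambda>k. s + c * h k"]
      tendsto_add[OF tendsto_const tendsto_mult[OF tendsto_const h(1)], of s c] by simp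
  show "(\<lambda>k. integral\<^sup>L M (ramp s (h k))) \<longlonglongrightarrow> cdf M s"
  proof (rule tendsto_sandwich[OF always_eventually always_eventually tendsto_const cdf_lim[of 1]])
    show "\<forall>k. cdf M s \<le> integral\<^sup>L M (ramp s (h k))"
      using cdf_le_integral_ramp[OF int_upper h(2)] by simp
    show "\<forall>k. integral\<^sup>L M (ramp s (h k)) \<le> cdf M (s + 1 * h k)"
      using integral_ramp_le_cdf[OF int_upper h(2)] by simp
  qed
  show "(\<lambda>k. integral\<^sup>L M (ramp (s - h k) (h k))) \<longlonglongrightarrow> cdf M s"
  proof (rule tendsto_sandwich[OF always_eventually always_eventually cdf_lim[of "-1"] tendsto_const])
    show "\<forall>k. cdf M (s + - 1 * h k) \<le> integral\<^sup>L M (ramp (s - h k) (h k))"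
      using cdf_le_integral_ramp[OF int_lower h(2)] by simp
    show "\<forall>k. integral\<^sup>L M (ramp (s - h k) (h k)) \<le> cdf M s"
      using integral_ramp_le_cdf[OF int_lower h(2)] by (metis diff_add_cancel)
  qed
qed

lemma cdf_tendsto_of_integral_max_tendsto:
  fixes M :: "nat \<Rightarrow> real measure" and N :: "real measure"
  assumes M: "\<And>n. real_distribution (M n)" and N: "real_distribution N"
    and int_M: "\<And>n t. 0 \<le> t \<Longrightarrow> integrable (M n) (max t)"
    and int_N: "\<And>t. 0 \<le> t \<Longrightarrow> integrable N (max t)"
    and conv: "\<And>t. 0 \<le> t \<Longrightarrow> (\<lambda>n. integral\<^sup>L (M n) (max t)) \<longlonglongrightarrow> integral\<^sup>L N (max t)"
    and s: "0 < s" and cont: "isCont (cdf N) s"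
  shows "(\<lambda>n. cdf (M n) s) \<longlonglongrightarrow> cdf N s"
proof -
  define h where "h k = s / real (Suc k)" for k
  have h: "0 < h k" "h k \<le> s" for k
    using s by (auto simp: h_def field_simps)
  have h_lim: "h \<longlonglongrightarrow> 0"
    unfolding h_def using LIMSEQ_Suc[OF lim_const_over_n[of s]] .
  have s_h: "0 \<le> s - h k" for k using h(2)[of k] by simp
  have int_ramp_M: "integrable (M n) (ramp t (h k))" and int_ramp_N: "integrable N (ramp t (h k))"
    if "0 \<le> t" for n t k
    using that h(1)[of k] int_M int_N by (simp_all add: integrable_ramp)
  have ramp_conv: "(\<lambda>n. integral\<^sup>L (M n) (ramp t (h k))) \<longlonglongrightarrow> integral\<^sup>L N (ramp t (h k))"
    if "0 \<le> t" for t k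
  proof -
    have "0 \<le> t + h k" using that h(1)[of k] by linarith
    have "(\<lambda>n. (integral\<^sup>L (M n) (max (t + h k)) - integral\<^sup>L (M n) (max t)) / h k)
        \<longlonglongrightarrow> (integral\<^sup>L N (max (t + h k)) - integral\<^sup>L N (max t)) / h k"
      using tendsto_divide[OF tendsto_diff[OF conv[OF \<open>0 \<le> t + h k\<close>] conv[OF that]]
          tendsto_const, of "h k"] h(1)[of k]
      by simp
    then show ?thesis
      using that \<open>0 \<le> t + h k\<close> int_M int_N by (simp add: integral_ramp)
  qed
  note N_lim = real_distribution.integral_ramp_tendsto_cdf[OF N cont h_lim h(1)
      int_ramp_N[OF less_imp_le[OF s]] int_ramp_N[OF s_h]]
  show ?thesis
  proof (rule tendsto_squeeze_limits[OF _ _ ramp_conv[OF s_h] ramp_conv[OF less_imp_le[OF s]] N_lim(2,1)])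
    show "\<forall>\<^sub>F n in sequentially. integral\<^sup>L (M n) (ramp (s - h k) (h k)) \<le> cdf (M n) s" for k
      using real_distribution.integral_ramp_le_cdf[OF M int_ramp_M[OF s_h[of k]] h(1)[of k]]
      by (intro always_eventually allI) simp
    show "\<forall>\<^sub>F n in sequentially. cdf (M n) s \<le> integral\<^sup>L (M n) (ramp s (h k))" for k
      using real_distribution.cdf_le_integral_ramp[OF M int_ramp_M h(1)[of k]] s
      by (intro always_eventually allI) simp
  qed
qed

text \<open>Nonzero coordinates are needed to rescale by their inverses; a negative coordinate makes
  the box null for every distribution satisfying (H).\<close>

definition admissible_corner :: "(real ^ 'n::finite) measure \<Rightarrow> real ^ 'n \<Rightarrow> bool" where
  "admissible_corner F c \<longleftrightarrow> (\<forall>i. c $ i \<noteq> 0 \<and> measure F {y. y $ i = c $ i} = 0)"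

lemma admissible_corner_inf:
  "admissible_corner F a \<Longrightarrow> admissible_corner F b \<Longrightarrow> admissible_corner F (inf a b)"
  unfolding admissible_corner_def inf_vec_def by (auto simp: inf_min min_def)

lemma borel_measurable_vec_nth [measurable]: "(\<lambda>y::real ^ 'n::finite. y $ i) \<in> borel_measurable borel"
  by (intro borel_measurable_continuous_onI continuous_intros)

lemma condH_measure_atMost_eq_0:
  assumes "condH P" "c $ i < 0"
  shows "measure P {..c} = 0"
proof -
  have "AE y in P. 0 \<le> y $ i" using assms(1) unfolding condH_def by blast
  then have "AE y in P. y \<notin> {..c}"
    by eventually_elim (use assms(2) in \<open>auto simp: less_eq_vec_def not_le intro: exI[of _ i]\<close>)
  then have "emeasure P {y \<in> space P. y \<in> {..c}} = 0" by (rule emeasure_eq_0_AE)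
  moreover have "space P = UNIV"
    using assms(1) unfolding condH_def by (metis sets_eq_imp_space_eq space_borel)
  ultimately show ?thesis by (simp add: measure_def atMost_def)
qed

definition corner_gauge :: "real ^ 'n::finite \<Rightarrow> real ^ 'n \<Rightarrow> real" where
  "corner_gauge c y = Max (range (\<lambda>i. y $ i / c $ i))"

lemma borel_measurable_corner_gauge [measurable]: "corner_gauge c \<in> borel_measurable borel"
  unfolding corner_gauge_def[abs_def] by (intro borel_measurable_Max) auto

context
  fixes c :: "real ^ 'n::finite"
  assumes c_pos: "\<And>i. 0 < c $ i"
begin

lemma Fnorm_integrand_inverse_corner:
  "0 \<le> t \<Longrightarrow> Fnorm_integrand t (\<chi> i. 1 / c $ i) = (\<lambda>y. max t (corner_gauge c y))"
  using c_pos by (auto simp: Fnorm_integrand_def corner_gauge_def abs_of_pos)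

lemma corner_gauge_le_1_iff: "corner_gauge c y \<le> 1 \<longleftrightarrow> y \<le> c"
proof -
  have "y $ i / c $ i \<le> 1 \<longleftrightarrow> y $ i \<le> c $ i" for i
    using c_pos[of i] by (simp add: pos_divide_le_eq)
  then show ?thesis by (simp add: corner_gauge_def less_eq_vec_def)
qed

lemma corner_gauge_eq_1_imp: "corner_gauge c y = 1 \<Longrightarrow> \<exists>i. y $ i = c $ i"
proof -
  assume "corner_gauge c y = 1"
  moreover have "corner_gauge c y \<in> range (\<lambda>i. y $ i / c $ i)"
    unfolding corner_gauge_def by (intro Max_in) auto
  ultimately obtain i where "y $ i / c $ i = 1" by auto
  then have "y $ i = c $ i" using c_pos[of i] by (simp add: field_simps)
  then show ?thesis by blast
qed

lemma
  assumes P: "condH P"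
  shows real_distribution_corner_gauge: "real_distribution (distr P borel (corner_gauge c))"
    and integrable_max_corner_gauge:
      "0 \<le> t \<Longrightarrow> integrable (distr P borel (corner_gauge c)) (max t)"
    and integral_max_corner_gauge:
      "0 \<le> t \<Longrightarrow> integral\<^sup>L (distr P borel (corner_gauge c)) (max t) = Fnorm P t (\<chi> i. 1 / c $ i)"
    and cdf_corner_gauge: "cdf (distr P borel (corner_gauge c)) 1 = measure P {..c}"
proof -
  have ffm: "finite_first_moment P" using P by (rule condH_imp_finite_first_moment)
  interpret prob_space P using finite_first_moment_prob_space[OF ffm] .
  have gauge: "corner_gauge c \<in> borel_measurable P"
    by (rule finite_first_moment_measurable[OF ffm borel_measurable_corner_gauge])
  show "real_distribution (distr P borel (corner_gauge c))" using gauge by simp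
  show "integrable (distr P borel (corner_gauge c)) (max t)" if "0 \<le> t"
    using integrable_lipschitz[OF ffm borel_measurable_Fnorm_integrand Fnorm_integrand_lipschitz,
        of t "\<chi> i. 1 / c $ i"] gauge
    by (simp add: integrable_distr_eq Fnorm_integrand_inverse_corner[OF that])
  show "integral\<^sup>L (distr P borel (corner_gauge c)) (max t) = Fnorm P t (\<chi> i. 1 / c $ i)" if "0 \<le> t"
    using gauge by (simp add: integral_distr Fnorm_eq_integral Fnorm_integrand_inverse_corner[OF that])
  show "cdf (distr P borel (corner_gauge c)) 1 = measure P {..c}"
    using gauge finite_first_moment_space[OF ffm]
    by (simp add: cdf_def measure_distr vimage_def corner_gauge_le_1_iff atMost_def)
qed

lemma isCont_cdf_corner_gauge:
  assumes F: "condH F" and c: "admissible_corner F c"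
  shows "isCont (cdf (distr F borel (corner_gauge c))) 1"
proof -
  interpret F: prob_space F using F unfolding condH_def by blast
  interpret D: real_distribution "distr F borel (corner_gauge c)"
    by (rule real_distribution_corner_gauge[OF F])
  have sets_F: "sets F = sets borel" using F unfolding condH_def by blast
  have gauge_F: "corner_gauge c \<in> borel_measurable F"
    using borel_measurable_corner_gauge unfolding measurable_cong_sets[OF sets_F refl] .
  have hyperplanes: "{y. y $ i = c $ i} \<in> sets F" for i
    unfolding sets_F by measurable
  have "measure (distr F borel (corner_gauge c)) {1} = measure F {y. corner_gauge c y = 1}"
    using gauge_F sets_eq_imp_space_eq[OF sets_F] by (simp add: measure_distr vimage_def)
  also have "\<dots> \<le> measure F (\<Union>i. {y. y $ i = c $ i})"
    using corner_gauge_eq_1_imp hyperplanes by (intro F.finite_measure_mono) auto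
  also have "\<dots> \<le> (\<Sum>i\<in>UNIV. measure F {y. y $ i = c $ i})"
    using hyperplanes by (intro F.finite_measure_subadditive_finite) auto
  also have "\<dots> = 0" using c by (simp add: admissible_corner_def)
  finally have "measure (distr F borel (corner_gauge c)) {1} = 0" by (simp add: measure_le_0_iff)
  then show ?thesis by (simp add: D.isCont_cdf)
qed

end

lemma measure_atMost_tendsto:
  fixes Fs :: "nat \<Rightarrow> (real ^ 'n::finite) measure"
  assumes Fs: "\<And>n. condH (Fs n)" and F: "condH F"
    and conv: "\<And>x0 x. (\<lambda>n. Fnorm (Fs n) x0 x) \<longlonglongrightarrow> Fnorm F x0 x"
    and c: "admissible_corner F c"
  shows "(\<lambda>n. measure (Fs n) {..c}) \<longlonglongrightarrow> measure F {..c}"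
proof (cases "\<exists>i. c $ i < 0")
  case True
  then obtain i where "c $ i < 0" ..
  then show ?thesis using condH_measure_atMost_eq_0[OF Fs] condH_measure_atMost_eq_0[OF F] by simp
next
  case False
  with c have c_pos: "0 < c $ i" for i
    unfolding admissible_corner_def by (metis linorder_neqE_linordered_idom)
  have "(\<lambda>n. cdf (distr (Fs n) borel (corner_gauge c)) 1) \<longlonglongrightarrow> cdf (distr F borel (corner_gauge c)) 1"
    using c_pos Fs F conv
    by (intro cdf_tendsto_of_integral_max_tendsto isCont_cdf_corner_gauge c real_distribution_corner_gauge
        integrable_max_corner_gauge) (simp_all add: integral_max_corner_gauge)
  then show ?thesis using cdf_corner_gauge[OF c_pos Fs] cdf_corner_gauge[OF c_pos F] by simp
qed

lemma measure_UN_tendsto_of_Int_stable: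
  fixes M :: "nat \<Rightarrow> 'a measure" and A :: "'i \<Rightarrow> 'a set"
  assumes M: "\<And>n. finite_measure (M n)" and N: "finite_measure N"
    and sets_M: "\<And>B n. B \<in> S \<Longrightarrow> B \<in> sets (M n)" and sets_N: "\<And>B. B \<in> S \<Longrightarrow> B \<in> sets N"
    and Int_S: "\<And>B B'. B \<in> S \<Longrightarrow> B' \<in> S \<Longrightarrow> B \<inter> B' \<in> S"
    and conv: "\<And>B. B \<in> S \<Longrightarrow> (\<lambda>n. measure (M n) B) \<longlonglongrightarrow> measure N B"
    and I: "finite I" "A ` I \<subseteq> S"
  shows "(\<lambda>n. measure (M n) (\<Union>i\<in>I. A i)) \<longlonglongrightarrow> measure N (\<Union>i\<in>I. A i)"
  using I
proof (induction I arbitrary: A rule: finite_induct)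
  case (insert j I)
  let ?U = "\<Union>i\<in>I. A i" and ?V = "\<Union>i\<in>I. A i \<inter> A j"
  have measure_insert: "measure K (\<Union>i\<in>insert j I. A i) = measure K (A j) + measure K ?U - measure K ?V"
    if "finite_measure K" "\<And>B. B \<in> S \<Longrightarrow> B \<in> sets K" for K
  proof -
    interpret finite_measure K by fact
    have sets: "A j \<in> sets K" "?U \<in> sets K"
      using insert.prems insert.hyps(1) that(2) by auto
    have "measure K (A j \<union> ?U) = measure K (A j) + measure K (?U - A j)"
      using sets by (rule finite_measure_Union')
    also have "measure K (?U - A j) = measure K ?U - measure K (?U \<inter> A j)"
      using sets by (intro finite_measure_Diff')
    also have "?U \<inter> A j = ?V" by blast
    finally show ?thesis by simp
  qed
  have "(\<lambda>n. measure (M n) (A j)) \<longlonglongrightarrow> measure N (A j)"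
    using insert.prems conv by simp
  moreover have "(\<lambda>n. measure (M n) ?U) \<longlonglongrightarrow> measure N ?U"
    using insert.prems by (intro insert.IH) simp
  moreover have "(\<lambda>n. measure (M n) ?V) \<longlonglongrightarrow> measure N ?V"
    using insert.prems Int_S by (intro insert.IH) auto
  ultimately have "(\<lambda>n. measure (M n) (A j) + measure (M n) ?U - measure (M n) ?V)
      \<longlonglongrightarrow> measure N (A j) + measure N ?U - measure N ?V"
    by (intro tendsto_diff tendsto_add)
  then show ?case
    using measure_insert[OF M sets_M] measure_insert[OF N sets_N] by simp
qed simp

lemma sets_borel_atMost_vec [measurable]: "{..c :: real ^ 'n::finite} \<in> sets borel"
  unfolding atMost_def less_eq_vec_def by measurable

definition cell :: "real ^ 'n::finite \<Rightarrow> real ^ 'n \<Rightarrow> (real ^ 'n) set" where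
  "cell l u = {y. \<forall>i. l $ i < y $ i \<and> y $ i \<le> u $ i}"

lemma sets_borel_cell [measurable]: "cell l u \<in> sets borel"
  unfolding cell_def by measurable

lemma cell_eq_atMost_Diff:
  "cell l u = {..u} - (\<Union>i. {..\<chi> k. if k = i then l $ i else u $ k})"
proof (intro set_eqI iffI)
  fix y assume "y \<in> cell l u"
  then show "y \<in> {..u} - (\<Union>i. {..\<chi> k. if k = i then l $ i else u $ k})"
    by (auto simp: cell_def less_eq_vec_def not_le)
next
  fix y assume y: "y \<in> {..u} - (\<Union>i. {..\<chi> k. if k = i then l $ i else u $ k})"
  show "y \<in> cell l u"
    unfolding cell_def
  proof (intro CollectI allI conjI)
    fix i
    show "y $ i \<le> u $ i" using y by (simp add: less_eq_vec_def)
    show "l $ i < y $ i"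
    proof (rule ccontr)
      assume "\<not> l $ i < y $ i"
      then have "y \<le> (\<chi> k. if k = i then l $ i else u $ k)"
        using y by (auto simp: less_eq_vec_def)
      then show False using y by blast
    qed
  qed
qed

lemma measure_cell_tendsto:
  fixes Fs :: "nat \<Rightarrow> (real ^ 'n::finite) measure"
  assumes Fs: "\<And>n. condH (Fs n)" and F: "condH F"
    and conv: "\<And>x0 x. (\<lambda>n. Fnorm (Fs n) x0 x) \<longlonglongrightarrow> Fnorm F x0 x"
    and l: "admissible_corner F l" and u: "admissible_corner F u" and "l \<le> u"
  shows "(\<lambda>n. measure (Fs n) (cell l u)) \<longlonglongrightarrow> measure F (cell l u)"
proof -
  define v where "v i = (\<chi> k. if k = i then l $ i else u $ k)" for i
  have sets_condH: "B \<in> sets K" if "condH K" "B \<in> sets borel" for K :: "(real ^ 'n) measure" and B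
    using that unfolding condH_def by simp
  have finite_condH: "finite_measure K" if "condH K" for K :: "(real ^ 'n) measure"
    using that unfolding condH_def prob_space_def by simp
  have measure_cell: "measure K (cell l u) = measure K {..u} - measure K (\<Union>i. {..v i})"
    if K: "condH K" for K
  proof -
    interpret finite_measure K by (rule finite_condH[OF K])
    have "v i \<le> u" for i
      using \<open>l \<le> u\<close> by (simp add: v_def less_eq_vec_def)
    then have "(\<Union>i. {..v i}) \<subseteq> {..u}" by (auto intro: order.trans)
    moreover have "(\<Union>i. {..v i}) \<in> sets borel"
      using sets_borel_atMost_vec by (intro sets.finite_UN) auto
    ultimately show ?thesis
      unfolding cell_eq_atMost_Diff v_def[symmetric]
      by (intro finite_measure_Diff sets_condH[OF K] sets_borel_atMost_vec) auto
  qed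
  let ?S = "{{..c} | c. admissible_corner F c}"
  have "(\<lambda>n. measure (Fs n) (\<Union>i. {..v i})) \<longlonglongrightarrow> measure F (\<Union>i. {..v i})"
  proof (rule measure_UN_tendsto_of_Int_stable[where S = ?S])
    show "finite_measure (Fs n)" for n by (rule finite_condH[OF Fs])
    show "finite_measure F" by (rule finite_condH[OF F])
    show "B \<in> sets (Fs n)" if "B \<in> ?S" for B n
      using that sets_condH[OF Fs sets_borel_atMost_vec] by blast
    show "B \<in> sets F" if "B \<in> ?S" for B
      using that sets_condH[OF F sets_borel_atMost_vec] by blast
    show "(\<lambda>n. measure (Fs n) B) \<longlonglongrightarrow> measure F B" if "B \<in> ?S" for B
      using that measure_atMost_tendsto[OF Fs F conv] by blast
    show "B \<inter> B' \<in> ?S" if B: "B \<in> ?S" and B': "B' \<in> ?S" for B B'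
    proof -
      obtain a b where "B = {..a}" "B' = {..b}" "admissible_corner F a" "admissible_corner F b"
        using B B' by blast
      moreover have "{..a} \<inter> {..b} = {..inf a b}" by (auto simp: le_inf_iff)
      ultimately show ?thesis using admissible_corner_inf by blast
    qed
    show "(\<lambda>i. {..v i}) ` UNIV \<subseteq> ?S"
      using l u by (auto simp: v_def admissible_corner_def)
  qed simp
  with measure_atMost_tendsto[OF Fs F conv u] show ?thesis
    unfolding measure_cell[OF Fs] measure_cell[OF F] by (rule tendsto_diff)
qed

section \<open>Grids of cells with null boundaries\<close>

lemma exists_non_atom:
  fixes F :: "(real ^ 'n::finite) measure"
  assumes F: "prob_space F" "sets F = sets borel" and "a < b"
  shows "\<exists>t. a < t \<and> t < b \<and> measure F {y. y $ i = t} = 0"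
proof -
  interpret F: prob_space F by fact
  have nth_F: "(\<lambda>y. y $ i) \<in> borel_measurable F"
    using borel_measurable_vec_nth unfolding measurable_cong_sets[OF F(2) refl] .
  interpret D: real_distribution "distr F borel (\<lambda>y. y $ i)"
    using nth_F by simp
  have atom: "measure (distr F borel (\<lambda>y. y $ i)) {t} = measure F {y. y $ i = t}" for t
    using nth_F sets_eq_imp_space_eq[OF F(2)] by (simp add: measure_distr vimage_def)
  have "\<not> {a<..<b} \<subseteq> {t. 0 < measure (distr F borel (\<lambda>y. y $ i)) {t}}"
  proof
    assume "{a<..<b} \<subseteq> {t. 0 < measure (distr F borel (\<lambda>y. y $ i)) {t}}"
    then have "countable {a<..<b}" using D.countable_atoms by (rule countable_subset)
    with \<open>a < b\<close> show False using uncountable_open_interval[of a b] by blast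
  qed
  then obtain t where "t \<in> {a<..<b}" "\<not> 0 < measure (distr F borel (\<lambda>y. y $ i)) {t}"
    by blast
  then have "a < t" "t < b" "\<not> 0 < measure F {y. y $ i = t}"
    unfolding atom by auto
  moreover have "0 \<le> measure F {y. y $ i = t}" by (rule measure_nonneg)
  ultimately show ?thesis by (intro exI[of _ t]) simp
qed

text \<open>Grid point \<open>k\<close> lies in \<open>((k - 1) \<delta>, k \<delta>)\<close> and its hyperplane carries no F-mass; for
  \<open>k = 0\<close> it is negative, so the lowest cells contain the hyperplanes \<open>y $ i = 0\<close>.\<close>

definition grid_point :: "(real ^ 'n::finite) measure \<Rightarrow> real \<Rightarrow> 'n \<Rightarrow> nat \<Rightarrow> real" where
  "grid_point F \<delta> i k =
     (SOME t. (real k - 1) * \<delta> < t \<and> t < real k * \<delta> \<and> measure F {y. y $ i = t} = 0)"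

definition grid_corner :: "(real ^ 'n::finite) measure \<Rightarrow> real \<Rightarrow> ('n \<Rightarrow> nat) \<Rightarrow> real ^ 'n" where
  "grid_corner F \<delta> \<kappa> = (\<chi> i. grid_point F \<delta> i (\<kappa> i))"

definition grid_cell :: "(real ^ 'n::finite) measure \<Rightarrow> real \<Rightarrow> ('n \<Rightarrow> nat) \<Rightarrow> (real ^ 'n) set" where
  "grid_cell F \<delta> \<kappa> = cell (grid_corner F \<delta> \<kappa>) (grid_corner F \<delta> (\<lambda>i. Suc (\<kappa> i)))"

context
  fixes F :: "(real ^ 'n::finite) measure" and \<delta> :: real
  assumes F: "prob_space F" "sets F = sets borel" and \<delta>: "0 < \<delta>"
begin

lemma grid_point:
  shows grid_point_gt: "(real k - 1) * \<delta> < grid_point F \<delta> i k"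
    and grid_point_less: "grid_point F \<delta> i k < real k * \<delta>"
    and grid_point_non_atom: "measure F {y. y $ i = grid_point F \<delta> i k} = 0"
proof -
  have "(real k - 1) * \<delta> < real k * \<delta>" using \<delta> by simp
  then have "\<exists>t. (real k - 1) * \<delta> < t \<and> t < real k * \<delta> \<and> measure F {y. y $ i = t} = 0"
    by (rule exists_non_atom[OF F])
  then have "(real k - 1) * \<delta> < grid_point F \<delta> i k \<and> grid_point F \<delta> i k < real k * \<delta>
      \<and> measure F {y. y $ i = grid_point F \<delta> i k} = 0"
    unfolding grid_point_def by (rule someI_ex)
  then show "(real k - 1) * \<delta> < grid_point F \<delta> i k" and "grid_point F \<delta> i k < real k * \<delta>"
    and "measure F {y. y $ i = grid_point F \<delta> i k} = 0"
    by auto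
qed

lemma grid_point_strict_mono:
  assumes "k < k'"
  shows "grid_point F \<delta> i k < grid_point F \<delta> i k'"
proof -
  have "real k + 1 \<le> real k'" using assms by (metis Suc_leI of_nat_Suc of_nat_le_iff add.commute)
  then have "real k * \<delta> \<le> (real k' - 1) * \<delta>" using \<delta> by (intro mult_right_mono) auto
  then show ?thesis using grid_point_less[of i k] grid_point_gt[of k' i] by linarith
qed

lemma grid_point_mono: "k \<le> k' \<Longrightarrow> grid_point F \<delta> i k \<le> grid_point F \<delta> i k'"
  using grid_point_strict_mono[of k k' i] by (cases "k = k'") auto

lemma admissible_grid_corner: "admissible_corner F (grid_corner F \<delta> \<kappa>)"
  unfolding admissible_corner_def grid_corner_def
proof (intro allI conjI)
  fix i
  show "(\<chi> i. grid_point F \<delta> i (\<kappa> i)) $ i \<noteq> 0"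
  proof (cases "\<kappa> i")
    case 0
    then show ?thesis using grid_point_less[of i "\<kappa> i"] by simp
  next
    case (Suc k)
    have "0 \<le> real k * \<delta>" using \<delta> by simp
    then show ?thesis using grid_point_gt[of "\<kappa> i" i] Suc by simp
  qed
qed (simp add: grid_point_non_atom)

lemma grid_corner_le: "grid_corner F \<delta> \<kappa> \<le> grid_corner F \<delta> (\<lambda>i. Suc (\<kappa> i))"
  unfolding grid_corner_def less_eq_vec_def by (simp add: grid_point_mono)

lemma mem_grid_cell:
  "x \<in> grid_cell F \<delta> \<kappa> \<longleftrightarrow>
    (\<forall>i. grid_point F \<delta> i (\<kappa> i) < x $ i \<and> x $ i \<le> grid_point F \<delta> i (Suc (\<kappa> i)))"
  unfolding grid_cell_def cell_def grid_corner_def by simp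

lemma grid_cell_bounds:
  assumes "x \<in> grid_cell F \<delta> \<kappa>"
  shows "(real (\<kappa> i) - 1) * \<delta> < x $ i" "x $ i < (real (\<kappa> i) + 1) * \<delta>"
proof -
  have "grid_point F \<delta> i (\<kappa> i) < x $ i" "x $ i \<le> grid_point F \<delta> i (Suc (\<kappa> i))"
    using assms unfolding mem_grid_cell by auto
  moreover have "real (Suc (\<kappa> i)) * \<delta> = (real (\<kappa> i) + 1) * \<delta>" by simp
  ultimately show "(real (\<kappa> i) - 1) * \<delta> < x $ i" "x $ i < (real (\<kappa> i) + 1) * \<delta>"
    using grid_point_gt[of "\<kappa> i" i] grid_point_less[of i "Suc (\<kappa> i)"] by linarith+
qed

lemma grid_cell_index_unique:
  assumes "x \<in> grid_cell F \<delta> \<kappa>" "x \<in> grid_cell F \<delta> \<kappa>'"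
  shows "\<kappa> = \<kappa>'"
proof
  fix i
  have "\<kappa> i \<le> \<kappa>' i" if "x \<in> grid_cell F \<delta> \<kappa>" "x \<in> grid_cell F \<delta> \<kappa>'" for \<kappa> \<kappa>'
  proof (rule ccontr)
    assume "\<not> \<kappa> i \<le> \<kappa>' i"
    then have "grid_point F \<delta> i (Suc (\<kappa>' i)) \<le> grid_point F \<delta> i (\<kappa> i)"
      by (intro grid_point_mono) simp
    then show False using that unfolding mem_grid_cell by (meson not_le order_trans)
  qed
  then show "\<kappa> i = \<kappa>' i" using assms by (meson antisym)
qed

lemma disjoint_grid_cells: "disjoint_family (grid_cell F \<delta>)"
  unfolding disjoint_family_on_def using grid_cell_index_unique by blast

lemma l1norm_diff_grid_cell_le:
  assumes "x \<in> grid_cell F \<delta> \<kappa>" "y \<in> grid_cell F \<delta> \<kappa>"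
  shows "l1norm (x - y) \<le> real CARD('n) * (2 * \<delta>)"
proof -
  have "\<bar>(x - y) $ i\<bar> \<le> 2 * \<delta>" for i
    using grid_cell_bounds[OF assms(1), of i] grid_cell_bounds[OF assms(2), of i]
    by (simp add: algebra_simps abs_le_iff)
  then show ?thesis
    unfolding l1norm_def using sum_bounded_above[of UNIV "\<lambda>i. \<bar>(x - y) $ i\<bar>" "2 * \<delta>"] by simp
qed

lemma l1norm_grid_cell_le:
  assumes "\<kappa> \<in> Pi\<^sub>E UNIV (\<lambda>_. {..<Kn})" "x \<in> grid_cell F \<delta> \<kappa>"
  shows "l1norm x \<le> real CARD('n) * (real Kn * \<delta>)"
proof -
  have "\<bar>x $ i\<bar> \<le> real Kn * \<delta>" for i
  proof -
    have Kn: "real (\<kappa> i) + 1 \<le> real Kn"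
      using assms(1) by (metis PiE_mem UNIV_I lessThan_iff Suc_leI of_nat_Suc of_nat_le_iff add.commute)
    have "(real (\<kappa> i) + 1) * \<delta> \<le> real Kn * \<delta>"
      using Kn \<delta> by (intro mult_right_mono) auto
    moreover have "\<delta> \<le> real Kn * \<delta>"
      using Kn \<delta> mult_right_mono[of 1 "real Kn" \<delta>] by simp
    moreover have "0 \<le> real (\<kappa> i) * \<delta>" using \<delta> by simp
    ultimately have "(real (\<kappa> i) + 1) * \<delta> \<le> real Kn * \<delta>" "- (real Kn * \<delta>) \<le> (real (\<kappa> i) - 1) * \<delta>"
      unfolding left_diff_distrib by linarith+
    then show ?thesis using grid_cell_bounds[OF assms(2), of i] by (simp add: abs_le_iff)
  qed
  then show ?thesis
    unfolding l1norm_def using sum_bounded_above[of UNIV "\<lambda>i. \<bar>x $ i\<bar>" "real Kn * \<delta>"] by simp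
qed

lemma grid_cells_cover:
  assumes "\<And>i. 0 \<le> x $ i" "\<And>i. x $ i \<le> (real Kn - 1) * \<delta>"
  shows "\<exists>\<kappa>\<in>Pi\<^sub>E UNIV (\<lambda>_. {..<Kn}). x \<in> grid_cell F \<delta> \<kappa>"
proof -
  define \<kappa> where "\<kappa> i = (LEAST k. x $ i \<le> grid_point F \<delta> i (Suc k))" for i
  have Kn: "0 < Kn" using assms[of undefined] \<delta> by (cases Kn) (auto simp: mult_less_0_iff)
  have top: "x $ i \<le> grid_point F \<delta> i (Suc (Kn - 1))" for i
    using assms(2)[of i] grid_point_gt[of "Suc (Kn - 1)" i] Kn by simp
  have upper: "x $ i \<le> grid_point F \<delta> i (Suc (\<kappa> i))" for i
    unfolding \<kappa>_def by (rule LeastI[of "\<lambda>k. x $ i \<le> grid_point F \<delta> i (Suc k)", OF top])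
  have less: "\<kappa> i < Kn" for i
    using Least_le[of "\<lambda>k. x $ i \<le> grid_point F \<delta> i (Suc k)", OF top] Kn unfolding \<kappa>_def by linarith
  have lower: "grid_point F \<delta> i (\<kappa> i) < x $ i" for i
  proof (cases "\<kappa> i")
    case 0
    then show ?thesis using grid_point_less[of i 0] assms(1)[of i] by simp
  next
    case (Suc k)
    then have "\<not> x $ i \<le> grid_point F \<delta> i (Suc k)"
      using not_less_Least[of k "\<lambda>k. x $ i \<le> grid_point F \<delta> i (Suc k)"] by (simp add: \<kappa>_def)
    then show ?thesis using Suc by simp
  qed
  have "\<kappa> \<in> Pi\<^sub>E UNIV (\<lambda>_. {..<Kn})" using less by auto
  moreover have "x \<in> grid_cell F \<delta> \<kappa>" using upper lower by (simp add: mem_grid_cell)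
  ultimately show ?thesis by blast
qed

end

definition max_coord :: "real ^ 'n::finite \<Rightarrow> real" where
  "max_coord y = Max (range (\<lambda>i. y $ i))"

lemma borel_measurable_max_coord [measurable]: "max_coord \<in> borel_measurable borel"
  unfolding max_coord_def[abs_def] by (intro borel_measurable_Max) auto

lemma component_le_max_coord: "y $ i \<le> max_coord y"
  unfolding max_coord_def by simp

lemma abs_max_coord_le_l1norm: "\<bar>max_coord y\<bar> \<le> l1norm y"
proof -
  have "max_coord y \<in> range (\<lambda>i. y $ i)" unfolding max_coord_def by (intro Max_in) auto
  then show ?thesis using abs_component_le_l1norm by auto
qed

lemma l1norm_le_max_coord:
  assumes "\<And>i. 0 \<le> y $ i"
  shows "l1norm y \<le> real CARD('n) * max_coord (y :: real ^ 'n::finite)"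
  unfolding l1norm_def using assms component_le_max_coord[of y]
    sum_bounded_above[of UNIV "\<lambda>i. \<bar>y $ i\<bar>" "max_coord y"] by simp

lemma integrable_max_max_coord:
  assumes "finite_first_moment P" "0 \<le> R"
  shows "integrable P (\<lambda>y. max R (max_coord y))"
proof -
  have eq: "Fnorm_integrand R 1 = (\<lambda>y. max R (max_coord y))"
    using assms(2) by (auto simp: Fnorm_integrand_def max_coord_def)
  have "integrable P (Fnorm_integrand R 1)"
    by (rule integrable_lipschitz[OF assms(1) borel_measurable_Fnorm_integrand Fnorm_integrand_lipschitz])
  then show ?thesis unfolding eq .
qed

lemma Fnorm_one_eq:
  assumes "0 \<le> R"
  shows "Fnorm P R 1 = (\<integral>y. max R (max_coord y) \<partial>P)"
  using assms unfolding Fnorm_def max_coord_def by simp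

lemma Fnorm_one_minus_tendsto_0:
  fixes P :: "(real ^ 'n::finite) measure"
  assumes P: "condH P"
  shows "(\<lambda>m. Fnorm P (real m) 1 - real m) \<longlonglongrightarrow> 0"
proof -
  have ffm: "finite_first_moment P" using P by (rule condH_imp_finite_first_moment)
  interpret prob_space P using finite_first_moment_prob_space[OF ffm] .
  have "(\<lambda>m. \<integral>y. max (real m) (max_coord y) - real m \<partial>P) \<longlonglongrightarrow> (\<integral>y. 0 \<partial>P)"
  proof (rule integral_dominated_convergence[where w = l1norm])
    show "AE y in P. (\<lambda>m. max (real m) (max_coord y) - real m) \<longlonglongrightarrow> 0"
    proof (rule AE_I2, rule tendsto_eventually)
      fix y :: "real ^ 'n"
      obtain N :: nat where "max_coord y \<le> real N" using real_arch_simple by blast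
      then show "\<forall>\<^sub>F m in sequentially. max (real m) (max_coord y) - real m = 0"
        unfolding eventually_sequentially by (intro exI[of _ N]) auto
    qed
    have "norm (max (real m) (max_coord y) - real m) \<le> l1norm y" for m and y :: "real ^ 'n"
    proof -
      have "norm (max (real m) (max_coord y) - real m) \<le> \<bar>max_coord y\<bar>" by (auto simp: max_def)
      then show ?thesis using abs_max_coord_le_l1norm[of y] by linarith
    qed
    then show "AE y in P. norm (max (real m) (max_coord y) - real m) \<le> l1norm y" for m
      by (intro AE_I2)
    have "(\<lambda>y. max (real m) (max_coord y) - real m) \<in> borel_measurable borel" for m
      by measurable
    then show "(\<lambda>y. max (real m) (max_coord y) - real m) \<in> borel_measurable P" for m
      by (rule finite_first_moment_measurable[OF ffm])
  qed (simp_all add: finite_first_moment_integrable[OF ffm])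
  then show ?thesis
    using integrable_max_max_coord[OF ffm] by (simp add: Fnorm_one_eq prob_space)
qed

lemma (in disjoint_cells) residual_mult_l1norm_le:
  assumes R: "0 \<le> R"
    and bounded: "\<And>k x. k \<in> K \<Longrightarrow> x \<in> C k \<Longrightarrow> l1norm x \<le> L"
    and cover: "\<And>x. (\<And>i. 0 \<le> x $ i) \<Longrightarrow> max_coord x \<le> 2 * R \<Longrightarrow> \<exists>k\<in>K. x \<in> C k"
    and x: "\<And>i. 0 \<le> x $ i"
  shows "residual P Q x * l1norm x
    \<le> L * (\<Sum>k\<in>K. (1 - common_mass P Q k / measure P (C k)) * indicator (C k) x)
      + 2 * real CARD('n) * (max R (max_coord x) - R)"
proof (cases "\<exists>k\<in>K. x \<in> C k")
  case True
  then obtain k where k: "k \<in> K" "x \<in> C k" by blast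
  have "residual P Q x * l1norm x \<le> L * (1 - common_mass P Q k / measure P (C k))"
    unfolding residual_in_cell[OF k] mult.commute[of L]
    using common_mass_ratio_bounds(2)[of P Q k] bounded[OF k] by (intro mult_left_mono) auto
  moreover have "(\<Sum>k'\<in>K. (1 - common_mass P Q k' / measure P (C k')) * indicator (C k') x)
      = 1 - common_mass P Q k / measure P (C k)"
    using sum_indicator_disjoint_family[OF disjoint_C k(2) finite_K k(1)] .
  moreover have "0 \<le> max R (max_coord x) - R" by simp
  ultimately show ?thesis by (simp add: add_increasing2)
next
  case False
  then have "\<not> max_coord x \<le> 2 * R" using cover x by blast
  have "l1norm x \<le> real CARD('n) * max_coord x" using l1norm_le_max_coord x by blast
  also have "\<dots> \<le> 2 * real CARD('n) * (max R (max_coord x) - R)"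
    using \<open>\<not> max_coord x \<le> 2 * R\<close> R by (simp add: max_def algebra_simps mult_left_mono)
  finally show ?thesis
    using False residual_outside_cells[of x P Q] by (simp add: indicator_def)
qed

lemma (in disjoint_cells) integral_residual_l1norm_le:
  fixes P Q :: "(real ^ 'n) measure"
  assumes P: "condH P" and R: "0 \<le> R" and L: "0 \<le> L"
    and bounded: "\<And>k x. k \<in> K \<Longrightarrow> x \<in> C k \<Longrightarrow> l1norm x \<le> L"
    and cover: "\<And>x. (\<And>i. 0 \<le> x $ i) \<Longrightarrow> max_coord x \<le> 2 * R \<Longrightarrow> \<exists>k\<in>K. x \<in> C k"
  shows "(\<integral>x. residual P Q x * l1norm x \<partial>P)
    \<le> L * (\<Sum>k\<in>K. \<bar>measure P (C k) - measure Q (C k)\<bar>) + 2 * real CARD('n) * (Fnorm P R 1 - R)"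
proof -
  have ffm: "finite_first_moment P" using P by (rule condH_imp_finite_first_moment)
  interpret prob_space P using finite_first_moment_prob_space[OF ffm] .
  have P': "prob_space P" "sets P = sets borel" by (simp_all add: prob_space_axioms finite_first_moment_sets[OF ffm])
  note indicator = integrable_indicator_cell[OF P'] integral_indicator_cell[OF P']
  let ?c = "\<lambda>k. common_mass P Q k / measure P (C k)"
  let ?d = "real CARD('n)"
  define h where "h x = L * (\<Sum>k\<in>K. (1 - ?c k) * indicator (C k) x)
    + 2 * ?d * (max R (max_coord x) - R)" for x
  have int_max: "integrable P (\<lambda>y. max R (max_coord y))"
    by (rule integrable_max_max_coord[OF ffm R])
  have int_h: "integrable P h"
    unfolding h_def[abs_def] using indicator int_max
    by (intro Bochner_Integration.integrable_add integrable_mult_right Bochner_Integration.integrable_sum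
        Bochner_Integration.integrable_diff) auto
  have "AE x in P. \<forall>i\<in>UNIV. 0 \<le> x $ i"
    using P unfolding condH_def by (intro AE_finite_allI) auto
  then have "AE x in P. residual P Q x * l1norm x \<le> h x"
    unfolding h_def by eventually_elim (simp add: residual_mult_l1norm_le[OF R bounded cover])
  then have "(\<integral>x. residual P Q x * l1norm x \<partial>P) \<le> integral\<^sup>L P h"
    by (rule integral_mono_AE[OF integrable_residual_l1norm[OF ffm] int_h])
  also have "integral\<^sup>L P h
      = L * (\<Sum>k\<in>K. (1 - ?c k) * measure P (C k)) + 2 * ?d * (Fnorm P R 1 - R)"
    unfolding h_def using indicator int_max
    by (simp add: Bochner_Integration.integral_sum Fnorm_one_eq[OF R] prob_space)
  also have "\<dots> \<le> L * (\<Sum>k\<in>K. \<bar>measure P (C k) - measure Q (C k)\<bar>) + 2 * ?d * (Fnorm P R 1 - R)"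
  proof (intro add_right_mono mult_left_mono[OF sum_mono L])
    fix k
    have "(1 - ?c k) * measure P (C k) = measure P (C k) - common_mass P Q k"
      using common_mass_ratio_mult[of P Q k] by (simp add: algebra_simps)
    then show "(1 - ?c k) * measure P (C k) \<le> \<bar>measure P (C k) - measure Q (C k)\<bar>"
      by (simp add: common_mass_def)
  qed
  finally show ?thesis .
qed

lemma wasserstein_le_grid:
  fixes P Q F :: "(real ^ 'n::finite) measure"
  assumes P: "condH P" and Q: "condH Q" and F: "condH F"
    and \<delta>: "0 < \<delta>" and R: "0 \<le> R" and Kn: "2 * R \<le> (real Kn - 1) * \<delta>"
  shows "wasserstein P Q \<le> real CARD('n) * (2 * \<delta>)
    + 2 * (real CARD('n) * (real Kn * \<delta>)) * (\<Sum>\<kappa>\<in>Pi\<^sub>E UNIV (\<lambda>_. {..<Kn}).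
        \<bar>measure P (grid_cell F \<delta> \<kappa>) - measure Q (grid_cell F \<delta> \<kappa>)\<bar>)
    + 2 * real CARD('n) * (Fnorm P R 1 - R) + 2 * real CARD('n) * (Fnorm Q R 1 - R)"
proof -
  have F': "prob_space F" "sets F = sets borel" using F unfolding condH_def by auto
  let ?K = "Pi\<^sub>E UNIV (\<lambda>_::'n. {..<Kn})"
  let ?L = "real CARD('n) * (real Kn * \<delta>)"
  interpret disjoint_cells ?K "grid_cell F \<delta>"
  proof
    show "finite ?K" by (simp add: finite_PiE)
    show "grid_cell F \<delta> \<kappa> \<in> sets borel" for \<kappa>
      unfolding grid_cell_def by (rule sets_borel_cell)
    show "disjoint_family_on (grid_cell F \<delta>) ?K"
      using disjoint_grid_cells[OF F' \<delta>] by (rule disjoint_family_on_mono[rotated]) simp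
  qed
  have L: "0 \<le> ?L" using \<delta> by simp
  have cover: "\<exists>\<kappa>\<in>?K. x \<in> grid_cell F \<delta> \<kappa>" if "\<And>i. 0 \<le> x $ i" "max_coord x \<le> 2 * R" for x
  proof (rule grid_cells_cover[OF F' \<delta>])
    show "x $ i \<le> (real Kn - 1) * \<delta>" for i
      using component_le_max_coord[of x i] that(2) Kn by linarith
  qed (rule that(1))
  have ffm: "finite_first_moment P" "finite_first_moment Q"
    using P Q by (simp_all add: condH_imp_finite_first_moment)
  have "wasserstein P Q \<le> real CARD('n) * (2 * \<delta>)
      + (\<integral>x. residual P Q x * l1norm x \<partial>P) + (\<integral>y. residual Q P y * l1norm y \<partial>Q)"
    using \<delta> by (intro wasserstein_le_cells ffm l1norm_diff_grid_cell_le[OF F' \<delta>]) auto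
  moreover have "(\<integral>x. residual P Q x * l1norm x \<partial>P)
      \<le> ?L * (\<Sum>\<kappa>\<in>?K. \<bar>measure P (grid_cell F \<delta> \<kappa>) - measure Q (grid_cell F \<delta> \<kappa>)\<bar>)
        + 2 * real CARD('n) * (Fnorm P R 1 - R)"
    by (rule integral_residual_l1norm_le[OF P R L l1norm_grid_cell_le[OF F' \<delta>] cover])
  moreover have "(\<integral>y. residual Q P y * l1norm y \<partial>Q)
      \<le> ?L * (\<Sum>\<kappa>\<in>?K. \<bar>measure Q (grid_cell F \<delta> \<kappa>) - measure P (grid_cell F \<delta> \<kappa>)\<bar>)
        + 2 * real CARD('n) * (Fnorm Q R 1 - R)"
    by (rule integral_residual_l1norm_le[OF Q R L l1norm_grid_cell_le[OF F' \<delta>] cover])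
  ultimately show ?thesis by (simp add: abs_minus_commute)
qed

lemma grid_cell_mass_differences_tendsto_0:
  fixes Fs :: "nat \<Rightarrow> (real ^ 'n::finite) measure"
  assumes Fs: "\<And>n. condH (Fs n)" and F: "condH F"
    and conv: "\<And>x0 x. (\<lambda>n. Fnorm (Fs n) x0 x) \<longlonglongrightarrow> Fnorm F x0 x" and \<delta>: "0 < \<delta>"
  shows "(\<lambda>n. \<Sum>\<kappa>\<in>Pi\<^sub>E UNIV (\<lambda>_. {..<Kn}).
      \<bar>measure (Fs n) (grid_cell F \<delta> \<kappa>) - measure F (grid_cell F \<delta> \<kappa>)\<bar>) \<longlonglongrightarrow> 0"
proof -
  have F': "prob_space F" "sets F = sets borel" using F unfolding condH_def by auto
  have cell_conv: "(\<lambda>n. measure (Fs n) (grid_cell F \<delta> \<kappa>)) \<longlonglongrightarrow> measure F (grid_cell F \<delta> \<kappa>)" for \<kappa>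
    unfolding grid_cell_def
    by (rule measure_cell_tendsto[OF Fs F conv admissible_grid_corner[OF F' \<delta>]
        admissible_grid_corner[OF F' \<delta>] grid_corner_le[OF F' \<delta>]])
  have "(\<lambda>n. \<Sum>\<kappa>\<in>Pi\<^sub>E UNIV (\<lambda>_. {..<Kn}).
      \<bar>measure (Fs n) (grid_cell F \<delta> \<kappa>) - measure F (grid_cell F \<delta> \<kappa>)\<bar>)
      \<longlonglongrightarrow> (\<Sum>\<kappa>\<in>Pi\<^sub>E (UNIV :: 'n set) (\<lambda>_. {..<Kn}). 0)"
    by (intro tendsto_sum tendsto_rabs_zero LIM_zero cell_conv)
  then show ?thesis by simp
qed

lemma LIMSEQ_0_of_upper_bounds:
  fixes w :: "nat \<Rightarrow> real"
  assumes nonneg: "\<And>n. 0 \<le> w n"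
    and bounds: "\<And>e. 0 < e \<Longrightarrow> \<exists>b B. b \<longlonglongrightarrow> B \<and> B < e \<and> (\<forall>n. w n \<le> b n)"
  shows "w \<longlonglongrightarrow> 0"
proof (rule order_tendstoI)
  fix l :: real assume "l < 0"
  then show "\<forall>\<^sub>F n in sequentially. l < w n"
    using nonneg by (intro always_eventually) (auto intro: less_le_trans)
next
  fix u :: real assume "0 < u"
  then obtain b B where b: "b \<longlonglongrightarrow> B" "B < u" and w_le_b: "\<forall>n. w n \<le> b n"
    using bounds by blast
  from order_tendstoD(2)[OF b] have "\<forall>\<^sub>F n in sequentially. b n < u" .
  then show "\<forall>\<^sub>F n in sequentially. w n < u"
    by eventually_elim (use w_le_b in \<open>auto intro: le_less_trans\<close>)
qed

lemma wasserstein_tendsto_of_Fnorm_tendsto: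
  fixes Fs :: "nat \<Rightarrow> (real ^ 'n::finite) measure"
  assumes Fs: "\<And>n. condH (Fs n)" and F: "condH F"
    and conv: "\<And>x0 x. (\<lambda>n. Fnorm (Fs n) x0 x) \<longlonglongrightarrow> Fnorm F x0 x"
  shows "(\<lambda>n. wasserstein (Fs n) F) \<longlonglongrightarrow> 0"
proof (rule LIMSEQ_0_of_upper_bounds)
  show "0 \<le> wasserstein (Fs n) F" for n
    using Fs F by (intro wasserstein_nonneg condH_imp_finite_first_moment)
  fix e :: real assume e: "0 < e"
  define d where "d = real CARD('n)"
  have d: "0 < d" unfolding d_def by simp
  have "\<forall>\<^sub>F m in sequentially. Fnorm F (real m) 1 - real m < e / (8 * d)"
    using order_tendstoD(2)[OF Fnorm_one_minus_tendsto_0[OF F], of "e / (8 * d)"] e d by simp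
  then obtain m where tail: "Fnorm F (real m) 1 - real m < e / (8 * d)"
    by (auto simp: eventually_sequentially)
  define R where "R = real m"
  define \<delta> where "\<delta> = e / (4 * d)"
  define Kn where "Kn = nat \<lceil>2 * R / \<delta>\<rceil> + 1"
  have \<delta>: "0 < \<delta>" using e d by (simp add: \<delta>_def)
  have Kn: "2 * R \<le> (real Kn - 1) * \<delta>"
    using \<delta> by (simp add: Kn_def pos_divide_le_eq[symmetric]) linarith
  define S where "S n = (\<Sum>\<kappa>\<in>Pi\<^sub>E UNIV (\<lambda>_. {..<Kn}).
      \<bar>measure (Fs n) (grid_cell F \<delta> \<kappa>) - measure F (grid_cell F \<delta> \<kappa>)\<bar>)" for n
  have S: "S \<longlonglongrightarrow> 0"
    unfolding S_def by (rule grid_cell_mass_differences_tendsto_0[OF Fs F conv \<delta>])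
  let ?b = "\<lambda>n. d * (2 * \<delta>) + 2 * (d * (real Kn * \<delta>)) * S n
    + 2 * d * (Fnorm (Fs n) R 1 - R) + 2 * d * (Fnorm F R 1 - R)"
  let ?B = "d * (2 * \<delta>) + 4 * d * (Fnorm F R 1 - R)"
  have lim: "?b \<longlonglongrightarrow> d * (2 * \<delta>) + 2 * (d * (real Kn * \<delta>)) * 0
      + 2 * d * (Fnorm F R 1 - R) + 2 * d * (Fnorm F R 1 - R)"
    using S conv by (intro tendsto_intros)
  have eq: "d * (2 * \<delta>) + 2 * (d * (real Kn * \<delta>)) * 0
      + 2 * d * (Fnorm F R 1 - R) + 2 * d * (Fnorm F R 1 - R) = ?B"
    by simp
  from lim have "?b \<longlonglongrightarrow> ?B" unfolding eq .
  moreover have "?B < e"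
  proof -
    have "4 * d * (Fnorm F R 1 - R) < 4 * d * (e / (8 * d))"
      using tail d unfolding R_def by (intro mult_strict_left_mono) auto
    also have "\<dots> = e / 2" using d by simp
    finally show ?thesis using d by (simp add: \<delta>_def)
  qed
  moreover have "wasserstein (Fs n) F \<le> ?b n" for n
    unfolding d_def S_def using wasserstein_le_grid[OF Fs F F \<delta> _ Kn] by (simp add: R_def)
  ultimately show "\<exists>b B. b \<longlonglongrightarrow> B \<and> B < e \<and> (\<forall>n. wasserstein (Fs n) F \<le> b n)"
    by blast
qed

theorem theorem3p1:
  fixes Fs :: "nat \<Rightarrow> (real ^ 'n::finite) measure"
    and F :: "(real ^ 'n) measure"
  assumes "\<And>n. condH (Fs n)"
    and "condH F"
  shows "(\<forall>x0 x. (\<lambda>n. Fnorm (Fs n) x0 x) \<longlonglongrightarrow> Fnorm F x0 x)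
     \<longleftrightarrow> (\<lambda>n. wasserstein (Fs n) F) \<longlonglongrightarrow> 0"
proof
  assume "\<forall>x0 x. (\<lambda>n. Fnorm (Fs n) x0 x) \<longlonglongrightarrow> Fnorm F x0 x"
  then show "(\<lambda>n. wasserstein (Fs n) F) \<longlonglongrightarrow> 0"
    by (intro wasserstein_tendsto_of_Fnorm_tendsto[where Fs = Fs, OF assms]) blast
next
  assume "(\<lambda>n. wasserstein (Fs n) F) \<longlonglongrightarrow> 0"
  then show "\<forall>x0 x. (\<lambda>n. Fnorm (Fs n) x0 x) \<longlonglongrightarrow> Fnorm F x0 x"
    using Fnorm_tendsto_of_wasserstein[where Fs = Fs, OF assms] by blast
qed

end
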